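(* Let $R$ be the set of all permutations $\pi\in\mathfrak{S}_n$ ($n\ge1$) such that: $\pi$ avoids $231$; every cycle of $\pi$ has length $1$, $2$ or $3$; $\pi$ has at least one $2$-cycle and at least one fixed point; the set of all $3$-cycles of $\pi$ is a (nonempty) collection of crossing $3$-cycles with blocks $A,B,C$; and $1\in A$, $n\in C$. Then \[ r(t,x,y)=\sum_{\pi\in R}t^{c_1(\pi)}x^{c_2(\pi)}y^{c_3(\pi)}=\dfrac{y}{1-2y}\cdot\dfrac{6xt-2x^2t+2xt^2-x^2t^2}{(1-x)^2}. \]
   Context: A permutation avoids $231$ if there are no indices $i<j<k$ with $\pi_k<\pi_i<\pi_j$. A collection of crossing $3$-cycles of $\pi$ is a nonempty set of $3$-cycles $(a_i,c_i,b_i)$ (meaning $a_i\mapsto c_i\mapsto b_i\mapsto a_i$) of $\pi$ with $a_i<b_i<c_i$, such that $a_i<b_j<c_k$ for all $i,j,k$; its blocks are $A=\{a_i\}$, $B=\{b_i\}$, $C=\{c_i\}$. $c_k(\pi)$ is the number of $k$-cycles of $\pi$. (The paper describes $R$ as permutations composed of a single nonempty family of crossing 3-cycles that also cross some positive number of 2-cycles and at least one fixed point.) *)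

theory Defs
  imports "HOL-Analysis.Analysis" "HOL-Combinatorics.Permutations"
begin

definition avoids231 :: "(nat \<Rightarrow> nat) \<Rightarrow> nat \<Rightarrow> bool" where
  "avoids231 p n \<longleftrightarrow>
     \<not> (\<exists>i j k. 1 \<le> i \<and> i < j \<and> j < k \<and> k \<le> n \<and> p k < p i \<and> p i < p j)"

definition orb :: "(nat \<Rightarrow> nat) \<Rightarrow> nat \<Rightarrow> nat set" where
  "orb p i = {(p ^^ m) i | m. True}"

definition ncyc :: "nat \<Rightarrow> (nat \<Rightarrow> nat) \<Rightarrow> nat \<Rightarrow> nat" where
  "ncyc k p n = card {orb p i | i. i \<in> {1..n} \<and> card (orb p i) = k}"

text \<open>3-cycles (a,c,b) of p, i.e. a -> c -> b -> a with a<b<c, recorded as triples (a,b,c).\<close>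
definition three_cycles :: "(nat \<Rightarrow> nat) \<Rightarrow> (nat \<times> nat \<times> nat) set" where
  "three_cycles p = {(a,b,c). a < b \<and> b < c \<and> p a = c \<and> p c = b \<and> p b = a}"

definition crossing_3cycles :: "(nat \<Rightarrow> nat) \<Rightarrow> (nat \<times> nat \<times> nat) set \<Rightarrow> bool" where
  "crossing_3cycles p S \<longleftrightarrow> S \<noteq> {} \<and> S \<subseteq> three_cycles p \<and>
     (\<forall>(a,b,c)\<in>S. \<forall>(a',b',c')\<in>S. \<forall>(a'',b'',c'')\<in>S. a < b' \<and> b' < c'')"

definition blockA :: "(nat \<times> nat \<times> nat) set \<Rightarrow> nat set" where
  "blockA S = (\<lambda>(a,b,c). a) ` S"
definition blockC :: "(nat \<times> nat \<times> nat) set \<Rightarrow> nat set" where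
  "blockC S = (\<lambda>(a,b,c). c) ` S"

definition Rset :: "nat \<Rightarrow> (nat \<Rightarrow> nat) set" where
  "Rset n = {p. p permutes {1..n} \<and> avoids231 p n
     \<and> (\<forall>i\<in>{1..n}. card (orb p i) \<in> {1,2,3})
     \<and> ncyc 2 p n \<ge> 1 \<and> ncyc 1 p n \<ge> 1
     \<and> (\<forall>i\<in>{1..n}. card (orb p i) = 3 \<longrightarrow> (\<exists>(a,b,c)\<in>three_cycles p. i \<in> {a,b,c}))
     \<and> crossing_3cycles p (three_cycles p)
     \<and> 1 \<in> blockA (three_cycles p) \<and> n \<in> blockC (three_cycles p)}"

end

(*
  Let p be in R, with blocks A, B, C of its k crossing 3-cycles.  Avoiding 231
  forces A = {1..k}, C = {n-k+1..n} and B to be k consecutive positions, with p reversing A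
  onto C.  Going around the 3-cycles, p restricted to B is a permutation of {1..k} without a
  peak (no i < j < l with p i < p j > p l), and there are 2^(k-1) of those.  The g1 points left
  of B and the g2 points right of B are fixed points and 2-cycles, and 231-avoidance leaves two
  shapes: the whole middle is reversed, or both parts are reversed separately.  Conversely each
  such datum (k, beta, g1, g2, shape) gives a member of R, so the generating function is the
  product of sum_k 2^(k-1) y^k = y/(1-2y) with the series of the middle shapes, which splits by
  the parities of g1 and g2 into geometric series.
*)

theory Submission
  imports Defs
begin

section \<open>Absolutely summable families and geometric series\<close>

lemma has_sum_Sigma_real:
  fixes f :: "'a \<times> 'b \<Rightarrow> real"
  assumes "\<And>a. a \<in> A \<Longrightarrow> ((\<lambda>b. f (a, b)) has_sum g a) (B a)"
      and "\<And>a. a \<in> A \<Longrightarrow> ((\<lambda>b. \<bar>f (a, b)\<bar>) has_sum G a) (B a)"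
      and "(g has_sum s) A" and "G summable_on A"
  shows "(f has_sum s) (Sigma A B)"
proof -
  have "(\<lambda>z. \<bar>f z\<bar>) summable_on Sigma A B"
    by (rule summable_on_SigmaI[where g = G]) (use assms in auto)
  hence "f summable_on Sigma A B"
    using abs_summable_summable[of f "Sigma A B"] by simp
  thus ?thesis by (intro has_sum_SigmaI[where g = g]) (use assms in auto)
qed

lemma has_sum_mult_Times_real:
  fixes f :: "'a \<Rightarrow> real" and g :: "'b \<Rightarrow> real"
  assumes f: "(f has_sum S) A" and g: "(g has_sum T) B"
  shows "((\<lambda>(a, b). f a * g b) has_sum (S * T)) (A \<times> B)"
proof -
  have "(\<lambda>b. \<bar>g b\<bar>) summable_on B" "(\<lambda>a. \<bar>f a\<bar>) summable_on A"
    using f g summable_on_iff_abs_summable_on_real by (auto simp: has_sum_iff)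
  then obtain T' where T': "((\<lambda>b. \<bar>g b\<bar>) has_sum T') B"
    by (auto simp: summable_on_def)
  have fA: "(\<lambda>a. \<bar>f a\<bar> * T') summable_on A"
    using \<open>(\<lambda>a. \<bar>f a\<bar>) summable_on A\<close> by (rule summable_on_cmult_left)
  show ?thesis
  proof (rule has_sum_Sigma_real[where g = "\<lambda>a. f a * T" and G = "\<lambda>a. \<bar>f a\<bar> * T'"])
    show "((\<lambda>b. (\<lambda>(a, b). f a * g b) (a, b)) has_sum f a * T) B" for a
      using has_sum_cmult_right[OF g] by simp
    show "((\<lambda>b. \<bar>(\<lambda>(a, b). f a * g b) (a, b)\<bar>) has_sum \<bar>f a\<bar> * T') B" for a
      using has_sum_cmult_right[OF T', of "\<bar>f a\<bar>"] by (simp add: abs_mult)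
  qed (use has_sum_cmult_left[OF f] fA in auto)
qed

lemma has_sum_Diff_singleton:
  fixes f :: "'a \<Rightarrow> 'b :: banach"
  assumes S: "(f has_sum S) A" and x: "x \<in> A"
  shows "(f has_sum (S - f x)) (A - {x})"
proof -
  have "f summable_on (A - {x})"
    using summable_on_subset_banach[of f A "A - {x}"] S by (auto simp: has_sum_iff)
  then obtain S' where S': "(f has_sum S') (A - {x})"
    by (auto simp: summable_on_def)
  have "(f has_sum (f x + S')) (insert x (A - {x}))"
    by (rule has_sum_insert) (use S' in auto)
  with S x have "S = f x + S'"
    by (metis has_sum_unique insert_Diff)
  with S' show ?thesis by simp
qed

lemma has_sum_geometric:
  fixes z :: "'a :: {real_normed_field, banach}"
  assumes "norm z < 1"
  shows "((\<lambda>n. z ^ n) has_sum (1 / (1 - z))) UNIV"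
proof (rule norm_summable_imp_has_sum)
  show "summable (\<lambda>n. norm (z ^ n))"
    using assms by (simp add: norm_power summable_geometric)
  show "(\<lambda>n. z ^ n) sums (1 / (1 - z))"
    using geometric_sums[OF assms] by simp
qed

lemma has_sum_geometric_pairs:
  fixes x :: real
  assumes "\<bar>x\<bar> < 1"
  shows "((\<lambda>(a :: nat, b :: nat). x ^ (a + b)) has_sum (1 / (1 - x)^2)) UNIV"
  using has_sum_mult_Times_real[OF has_sum_geometric has_sum_geometric, of x x] assms
  by (simp add: power_add power2_eq_square)

lemma has_sum_geometric_pairs_nonzero:
  fixes x :: real
  assumes "\<bar>x\<bar> < 1"
  shows "((\<lambda>(a :: nat, b :: nat). x ^ (a + b)) has_sum (1 / (1 - x)^2 - 1)) (UNIV - {(0, 0)})"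
  using has_sum_Diff_singleton[OF has_sum_geometric_pairs[OF assms], of "(0, 0)"] by simp

section \<open>Reversals of the middle block\<close>

lemma antimono_interval_map_eq:
  fixes f :: "nat \<Rightarrow> nat"
  assumes maps: "\<And>x. a \<le> x \<Longrightarrow> x \<le> a + L \<Longrightarrow> c \<le> f x \<and> f x \<le> c + L"
    and decreasing: "\<And>x y. a \<le> x \<Longrightarrow> x < y \<Longrightarrow> y \<le> a + L \<Longrightarrow> f y < f x"
    and x: "a \<le> x" "x \<le> a + L"
  shows "f x = c + L - (x - a)"
proof -
  have upper: "f (a + j) \<le> c + L - j" if "j \<le> L" for j
    using that
  proof (induction j)
    case (Suc j)
    hence "f (a + Suc j) < f (a + j)" using decreasing[of "a + j" "a + Suc j"] by auto
    thus ?case using Suc by auto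
  qed (use maps[of a] in auto)
  have lower: "c + j \<le> f (a + L - j)" if "j \<le> L" for j
    using that
  proof (induction j)
    case (Suc j)
    hence "f (a + L - j) < f (a + L - Suc j)" using decreasing[of "a + L - Suc j" "a + L - j"] by auto
    thus ?case using Suc by auto
  qed (use maps[of "a + L"] in auto)
  obtain j where j: "x = a + j" "j \<le> L" using x le_Suc_ex by force
  show ?thesis using upper[of j] lower[of "L - j"] j by auto
qed

definition mid_inv :: "nat \<Rightarrow> nat \<Rightarrow> bool \<Rightarrow> nat \<Rightarrow> nat" where
  "mid_inv g1 g2 two_blocks u =
     (if two_blocks then (if u \<le> g1 then g1 + 1 - u else 2*g1 + g2 + 1 - u)
      else g1 + g2 + 1 - u)"

definition mid_fixes :: "nat \<Rightarrow> nat \<Rightarrow> bool \<Rightarrow> nat" where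
  "mid_fixes g1 g2 two_blocks = (if two_blocks then g1 mod 2 + g2 mod 2 else (g1 + g2) mod 2)"

definition mid_swaps :: "nat \<Rightarrow> nat \<Rightarrow> bool \<Rightarrow> nat" where
  "mid_swaps g1 g2 two_blocks = (if two_blocks then g1 div 2 + g2 div 2 else (g1 + g2) div 2)"

lemma mid_inv_range: "u \<in> {1..g1+g2} \<Longrightarrow> mid_inv g1 g2 b u \<in> {1..g1+g2}"
  by (auto simp: mid_inv_def)

lemma mid_inv_involution: "u \<in> {1..g1+g2} \<Longrightarrow> mid_inv g1 g2 b (mid_inv g1 g2 b u) = u"
  by (auto simp: mid_inv_def)

lemma mid_inv_le_iff: "b \<Longrightarrow> u \<in> {1..g1+g2} \<Longrightarrow> mid_inv g1 g2 b u \<le> g1 \<longleftrightarrow> u \<le> g1"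
  by (auto simp: mid_inv_def)

lemma mid_inv_ascent:
  "x \<in> {1..g1+g2} \<Longrightarrow> y \<in> {1..g1+g2} \<Longrightarrow> x < y \<Longrightarrow> mid_inv g1 g2 b x < mid_inv g1 g2 b y
   \<Longrightarrow> b \<and> x \<le> g1 \<and> g1 < y"
  by (auto simp: mid_inv_def split: if_splits)

lemma mid_inv_avoids_231:
  "x \<in> {1..g1+g2} \<Longrightarrow> z \<in> {1..g1+g2} \<Longrightarrow> x < y \<Longrightarrow> y < z
   \<Longrightarrow> mid_inv g1 g2 b z < mid_inv g1 g2 b x \<Longrightarrow> mid_inv g1 g2 b x < mid_inv g1 g2 b y \<Longrightarrow> False"
  by (auto simp: mid_inv_def split: if_splits)

lemma card_reflection_fixed: "card {u \<in> {a<..a+L}. u + u = 2*a + L + 1} = L mod 2"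
proof (cases "even L")
  case True
  hence "{u \<in> {a<..a+L}. u + u = 2*a + L + 1} = {}" by auto presburger
  thus ?thesis using True by simp
next
  case False
  hence "{u \<in> {a<..a+L}. u + u = 2*a + L + 1} = {a + (L + 1) div 2}" by auto presburger+
  thus ?thesis using False by simp presburger
qed

lemma card_reflection_raised: "card {u \<in> {a<..a+L}. u + u < 2*a + L + 1} = L div 2"
proof -
  have "{u \<in> {a<..a+L}. u + u < 2*a + L + 1} = {a<..a + L div 2}" by auto
  thus ?thesis by simp
qed

lemma card_mid_inv_fixed: "card {u \<in> {1..g1+g2}. mid_inv g1 g2 b u = u} = mid_fixes g1 g2 b"
proof (cases b)
  case False
  have "{u \<in> {1..g1+g2}. mid_inv g1 g2 b u = u} = {u \<in> {0<..0+(g1+g2)}. u + u = 2*0 + (g1+g2) + 1}"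
    using False by (auto simp: mid_inv_def)
  thus ?thesis using card_reflection_fixed[of 0 "g1+g2"] False by (simp add: mid_fixes_def)
next
  case True
  have "{u \<in> {1..g1+g2}. mid_inv g1 g2 b u = u}
      = {u \<in> {0<..0+g1}. u + u = 2*0 + g1 + 1} \<union> {u \<in> {g1<..g1+g2}. u + u = 2*g1 + g2 + 1}"
    using True by (auto simp: mid_inv_def)
  moreover have "card \<dots> = card {u \<in> {0<..0+g1}. u + u = 2*0 + g1 + 1}
      + card {u \<in> {g1<..g1+g2}. u + u = 2*g1 + g2 + 1}"
    by (rule card_Un_disjoint) auto
  ultimately show ?thesis
    using card_reflection_fixed[of 0 g1] card_reflection_fixed[of g1 g2] True
    by (simp add: mid_fixes_def)
qed

lemma card_mid_inv_raised: "card {u \<in> {1..g1+g2}. u < mid_inv g1 g2 b u} = mid_swaps g1 g2 b"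
proof (cases b)
  case False
  have "{u \<in> {1..g1+g2}. u < mid_inv g1 g2 b u} = {u \<in> {0<..0+(g1+g2)}. u + u < 2*0 + (g1+g2) + 1}"
    using False by (auto simp: mid_inv_def)
  thus ?thesis using card_reflection_raised[of 0 "g1+g2"] False by (simp add: mid_swaps_def)
next
  case True
  have "{u \<in> {1..g1+g2}. u < mid_inv g1 g2 b u}
      = {u \<in> {0<..0+g1}. u + u < 2*0 + g1 + 1} \<union> {u \<in> {g1<..g1+g2}. u + u < 2*g1 + g2 + 1}"
    using True by (auto simp: mid_inv_def)
  moreover have "card \<dots> = card {u \<in> {0<..0+g1}. u + u < 2*0 + g1 + 1}
      + card {u \<in> {g1<..g1+g2}. u + u < 2*g1 + g2 + 1}"
    by (rule card_Un_disjoint) auto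
  ultimately show ?thesis
    using card_reflection_raised[of 0 g1] card_reflection_raised[of g1 g2] True
    by (simp add: mid_swaps_def)
qed

text \<open>\<open>\<nu>\<close> stands for the middle points of a permutation of \<open>R\<close>, renumbered \<open>1..g1+g2\<close> with the
  \<open>g1\<close> points left of block B first; the hypotheses are what 231-avoidance forces on them.\<close>
locale mid_involution =
  fixes g1 g2 :: nat and \<nu> :: "nat \<Rightarrow> nat"
  assumes range: "u \<in> {1..g1+g2} \<Longrightarrow> \<nu> u \<in> {1..g1+g2}"
    and involution: "u \<in> {1..g1+g2} \<Longrightarrow> \<nu> (\<nu> u) = u"
    and decreasing_lower: "1 \<le> x \<Longrightarrow> x < y \<Longrightarrow> y \<le> g1 \<Longrightarrow> \<nu> y < \<nu> x"
    and ascent_lower: "1 \<le> x \<Longrightarrow> x < y \<Longrightarrow> y \<le> g1+g2 \<Longrightarrow> \<nu> x < \<nu> y \<Longrightarrow> \<nu> x \<le> g1"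
    and avoids_231: "1 \<le> x \<Longrightarrow> x < y \<Longrightarrow> y < z \<Longrightarrow> z \<le> g1+g2 \<Longrightarrow> \<nu> z < \<nu> x \<Longrightarrow> \<nu> x < \<nu> y
      \<Longrightarrow> False"
begin

lemma less_or_greater:
  assumes "x \<in> {1..g1+g2}" "y \<in> {1..g1+g2}" "x \<noteq> y"
  shows "\<nu> x < \<nu> y \<or> \<nu> y < \<nu> x"
  using involution assms by (metis linorder_neqE_nat)

lemma decreasing_upper:
  assumes xy: "g1 < x" "x < y" "y \<le> g1+g2"
  shows "\<nu> y < \<nu> x"
proof (rule ccontr)
  assume "\<not> \<nu> y < \<nu> x"
  hence asc: "\<nu> x < \<nu> y" using less_or_greater[of x y] xy by auto
  define u v where "u = \<nu> x" and "v = \<nu> y"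
  have u: "u \<in> {1..g1+g2}" "u \<le> g1" "\<nu> u = x"
    using range[of x] involution[of x] ascent_lower[of x y] xy asc by (auto simp: u_def)
  have v: "v \<in> {1..g1+g2}" "\<nu> v = y" "\<nu> y = v" "u < v"
    using range[of y] involution[of y] asc xy by (auto simp: u_def v_def)
  consider "x < v" | "v = x" | "v < x \<and> v \<le> g1" | "v < x \<and> g1 < v" by linarith
  thus False
  proof cases
    case 1
    hence "\<nu> u \<le> g1" using ascent_lower[of u y] u v xy by auto
    thus False using u xy by auto
  next
    case 2
    thus False using u v xy by (auto simp: u_def)
  next
    case 3
    hence "\<nu> v < \<nu> u" using decreasing_lower[of u v] u v by auto
    thus False using u v xy by auto
  next
    case 4
    have "\<nu> x < \<nu> u" "\<nu> u < \<nu> v" using u v xy by (auto simp: u_def)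
    thus False using avoids_231[of u v x] u v xy 4 by auto
  qed
qed

lemma two_blocks_case:
  assumes g: "1 \<le> g1" "1 \<le> g2" and first: "\<nu> 1 \<le> g1" and u: "u \<in> {1..g1+g2}"
  shows "\<nu> u = mid_inv g1 g2 True u"
proof -
  have lower: "\<nu> x \<in> {1..g1}" if "x \<in> {1..g1}" for x
  proof -
    have "\<nu> x \<le> \<nu> 1" using decreasing_lower[of 1 x] that by (cases "x = 1") auto
    thus ?thesis using first range[of x] that by auto
  qed
  have upper: "\<nu> y \<in> {g1+1..g1+g2}" if "y \<in> {g1+1..g1+g2}" for y
  proof (rule ccontr)
    assume "\<nu> y \<notin> {g1+1..g1+g2}"
    hence "\<nu> y \<in> {1..g1}" using range[of y] that by auto
    hence "\<nu> (\<nu> y) \<in> {1..g1}" by (rule lower)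
    thus False using involution[of y] that by auto
  qed
  show ?thesis
  proof (cases "u \<le> g1")
    case True
    thus ?thesis
      using antimono_interval_map_eq[of 1 "g1 - 1" 1 \<nu> u] lower decreasing_lower u g
      by (auto simp: mid_inv_def)
  next
    case False
    thus ?thesis
      using antimono_interval_map_eq[of "g1 + 1" "g2 - 1" "g1 + 1" \<nu> u] upper decreasing_upper u g
      by (auto simp: mid_inv_def)
  qed
qed

lemma decreasing_if_not_two_blocks:
  assumes not_two: "\<not> (1 \<le> g1 \<and> 1 \<le> g2 \<and> \<nu> 1 \<le> g1)"
    and xy: "1 \<le> x" "x < y" "y \<le> g1+g2"
  shows "\<nu> y < \<nu> x"
proof (cases "y \<le> g1 \<or> g1 < x")
  case True
  thus ?thesis using decreasing_lower decreasing_upper xy by auto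
next
  case False
  hence g: "1 \<le> g1" "1 \<le> g2" and first: "g1 < \<nu> 1" using xy not_two by auto
  show ?thesis
  proof (rule ccontr)
    assume "\<not> \<nu> y < \<nu> x"
    hence asc: "\<nu> x < \<nu> y" using less_or_greater[of x y] xy by auto
    show False
    proof (cases "\<nu> y \<le> g1")
      case True
      have "\<nu> (\<nu> y) < \<nu> (\<nu> x)" using decreasing_lower[of "\<nu> x" "\<nu> y"] True asc range[of x] xy by auto
      thus False using involution[of x] involution[of y] xy by auto
    next
      case False
      define w where "w = \<nu> 1"
      have w: "w \<in> {1..g1+g2}" "\<nu> w = 1" "g1 < w"
        using range[of 1] involution[of 1] first g by (auto simp: w_def)
      have "y < w"
      proof (rule ccontr)
        assume "\<not> y < w"
        moreover have "y \<noteq> w" using w False g by auto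
        ultimately have "\<nu> y < \<nu> w" using decreasing_upper[of w y] w xy by auto
        thus False using w range[of y] xy by auto
      qed
      moreover have "\<nu> w < \<nu> x"
      proof -
        have "x \<noteq> w" using w \<open>\<not> (y \<le> g1 \<or> g1 < x)\<close> by auto
        moreover have "\<nu> (\<nu> x) = x" using involution[of x] xy by simp
        ultimately have "\<nu> x \<noteq> 1" by (auto simp: w_def)
        thus ?thesis using w range[of x] xy by auto
      qed
      ultimately show False using avoids_231[of x y w] xy w asc by auto
    qed
  qed
qed

lemma one_block_case:
  assumes not_two: "\<not> (1 \<le> g1 \<and> 1 \<le> g2 \<and> \<nu> 1 \<le> g1)" and u: "u \<in> {1..g1+g2}"
  shows "\<nu> u = mid_inv g1 g2 False u"
proof -
  have L: "1 + (g1 + g2 - 1) = g1 + g2" using u by auto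
  have "\<nu> u = 1 + (g1 + g2 - 1) - (u - 1)"
    by (rule antimono_interval_map_eq) (use range decreasing_if_not_two_blocks[OF not_two] u L in auto)
  also have "\<dots> = g1 + g2 + 1 - u" using u by auto
  finally show ?thesis by (simp add: mid_inv_def)
qed

theorem eq_mid_inv: "\<exists>b. (b \<longrightarrow> 1 \<le> g1 \<and> 1 \<le> g2) \<and> (\<forall>u\<in>{1..g1+g2}. \<nu> u = mid_inv g1 g2 b u)"
proof (cases "1 \<le> g1 \<and> 1 \<le> g2 \<and> \<nu> 1 \<le> g1")
  case True
  thus ?thesis using two_blocks_case by (intro exI[of _ True]) auto
next
  case False
  thus ?thesis using one_block_case by (intro exI[of _ False]) auto
qed

end

section \<open>Generating function of the middle block\<close>

text \<open>A middle shape \<open>(g1, g2, b)\<close> requires both parts nonempty when \<open>b\<close> holds, since otherwise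
  both values of \<open>b\<close> describe the same involution.\<close>
definition mid_shapes :: "(nat \<times> nat \<times> bool) set" where
  "mid_shapes = {(g1, g2, b). (b \<longrightarrow> 1 \<le> g1 \<and> 1 \<le> g2) \<and> 1 \<le> mid_fixes g1 g2 b \<and> 1 \<le> mid_swaps g1 g2 b}"

definition mid_weight :: "real \<Rightarrow> real \<Rightarrow> nat \<times> nat \<times> bool \<Rightarrow> real" where
  "mid_weight t x = (\<lambda>(g1, g2, b). t ^ mid_fixes g1 g2 b * x ^ mid_swaps g1 g2 b)"

definition mid_gf :: "real \<Rightarrow> real \<Rightarrow> real" where
  "mid_gf t x = (6*x*t - 2*x^2*t + 2*x*t^2 - x^2*t^2) / (1 - x)^2"

lemma mid_shapes_cases:
  assumes shape: "(g1, g2, b) \<in> mid_shapes"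
  obtains (even_odd) a c where "(g1, g2, b) = (2*a, 2*c + 1, False)" "(a, c) \<noteq> (0, 0)"
    | (odd_even) a c where "(g1, g2, b) = (2*a + 1, 2*c, False)" "(a, c) \<noteq> (0, 0)"
    | (odd_even_split) a c where "(g1, g2, b) = (2*a + 1, 2*c + 2, True)"
    | (even_odd_split) a c where "(g1, g2, b) = (2*a + 2, 2*c + 1, True)"
    | (odd_odd_split) a c where "(g1, g2, b) = (2*a + 1, 2*c + 1, True)" "(a, c) \<noteq> (0, 0)"
proof (cases b)
  case False
  hence "odd (g1 + g2)" "(g1 div 2, g2 div 2) \<noteq> (0, 0)"
    using shape by (auto simp: mid_shapes_def mid_fixes_def mid_swaps_def; presburger)+
  thus ?thesis
    using even_odd[of "g1 div 2" "g2 div 2"] odd_even[of "g1 div 2" "g2 div 2"] False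
    by (cases "even g1") (auto elim!: evenE oddE)
next
  case True
  hence g: "1 \<le> g1" "1 \<le> g2" "odd g1 \<or> odd g2" "g1 \<noteq> 1 \<or> g2 \<noteq> 1"
    using shape by (auto simp: mid_shapes_def mid_fixes_def mid_swaps_def; presburger)+
  consider "odd g1" "odd g2" | "odd g1" "even g2" | "even g1" "odd g2" using g(3) by blast
  thus ?thesis
  proof cases
    case 1
    then obtain a c where "g1 = 2*a + 1" "g2 = 2*c + 1" by (auto elim!: oddE)
    thus ?thesis using odd_odd_split[of a c] True g(4) by auto
  next
    case 2
    then obtain a c where "g1 = 2*a + 1" "g2 = 2*c" by (auto elim!: oddE evenE)
    thus ?thesis using odd_even_split[of a "c - 1"] True g(2) by auto
  next
    case 3
    then obtain a c where "g1 = 2*a" "g2 = 2*c + 1" by (auto elim!: oddE evenE)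
    thus ?thesis using even_odd_split[of "a - 1" c] True g(1) by auto
  qed
qed

lemma mid_shapes_eq:
  "mid_shapes = (\<lambda>(a, c). (2*a, 2*c + 1, False)) ` (UNIV - {(0, 0)})
     \<union> (\<lambda>(a, c). (2*a + 1, 2*c, False)) ` (UNIV - {(0, 0)})
     \<union> (\<lambda>(a, c). (2*a + 1, 2*c + 2, True)) ` UNIV
     \<union> (\<lambda>(a, c). (2*a + 2, 2*c + 1, True)) ` UNIV
     \<union> (\<lambda>(a, c). (2*a + 1, 2*c + 1, True)) ` (UNIV - {(0, 0)})"
  (is "_ = ?F")
proof
  show "?F \<subseteq> mid_shapes"
    by (auto simp: mid_shapes_def mid_fixes_def mid_swaps_def)
  show "mid_shapes \<subseteq> ?F"
  proof
    fix q assume "q \<in> mid_shapes"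
    moreover obtain g1 g2 b where q: "q = (g1, g2, b)" by (cases q)
    ultimately have "(g1, g2, b) \<in> mid_shapes" by simp
    thus "q \<in> ?F" unfolding q
      by (cases rule: mid_shapes_cases) (simp_all add: image_iff Bex_def)
  qed
qed

lemma has_sum_image_cmult:
  fixes f :: "'a \<Rightarrow> 'c :: {topological_semigroup_mult, semiring_0}"
  assumes "inj_on h P" and "\<And>z. z \<in> P \<Longrightarrow> w (h z) = c * f z" and "(f has_sum S) P"
  shows "(w has_sum c * S) (h ` P)"
proof -
  have "((w \<circ> h) has_sum c * S) P"
    using has_sum_cong[of P "w \<circ> h" "\<lambda>z. c * f z"] has_sum_cmult_right[OF assms(3), of c] assms(2) by simp
  thus ?thesis by (simp add: has_sum_reindex[OF assms(1)])
qed

lemma has_sum_mid_weight: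
  fixes t x :: real
  assumes x: "\<bar>x\<bar> < 1"
  shows "(mid_weight t x has_sum mid_gf t x) mid_shapes"
proof -
  let ?G = "1 / (1 - x)^2"
  have odd_div_mod: "Suc (2*a) mod 2 = 1" "Suc (2*a) div 2 = a" "Suc (a*2) mod 2 = 1" "Suc (a*2) div 2 = a"
    for a :: nat by presburger+
  note pairs = has_sum_geometric_pairs[OF x] and pairs_nonzero = has_sum_geometric_pairs_nonzero[OF x]
  let ?F1 = "(\<lambda>(a :: nat, c :: nat). (2*a, 2*c + 1, False)) ` (UNIV - {(0, 0)})"
  let ?F2 = "(\<lambda>(a :: nat, c :: nat). (2*a + 1, 2*c, False)) ` (UNIV - {(0, 0)})"
  let ?F3 = "(\<lambda>(a :: nat, c :: nat). (2*a + 1, 2*c + 2, True)) ` UNIV"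
  let ?F4 = "(\<lambda>(a :: nat, c :: nat). (2*a + 2, 2*c + 1, True)) ` UNIV"
  let ?F5 = "(\<lambda>(a :: nat, c :: nat). (2*a + 1, 2*c + 1, True)) ` (UNIV - {(0, 0)})"
  have F1: "(mid_weight t x has_sum t * (?G - 1)) ?F1"
    by (rule has_sum_image_cmult[OF _ _ pairs_nonzero]) (auto simp: inj_on_def mid_weight_def mid_fixes_def mid_swaps_def odd_div_mod)
  have F2: "(mid_weight t x has_sum t * (?G - 1)) ?F2"
    by (rule has_sum_image_cmult[OF _ _ pairs_nonzero]) (auto simp: inj_on_def mid_weight_def mid_fixes_def mid_swaps_def odd_div_mod)
  have F3: "(mid_weight t x has_sum t * x * ?G) ?F3"
    by (rule has_sum_image_cmult[OF _ _ pairs])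
       (auto simp: inj_on_def mid_weight_def mid_fixes_def mid_swaps_def odd_div_mod mult_ac)
  have F4: "(mid_weight t x has_sum t * x * ?G) ?F4"
    by (rule has_sum_image_cmult[OF _ _ pairs])
       (auto simp: inj_on_def mid_weight_def mid_fixes_def mid_swaps_def odd_div_mod mult_ac)
  have F5: "(mid_weight t x has_sum t^2 * (?G - 1)) ?F5"
    by (rule has_sum_image_cmult[OF _ _ pairs_nonzero])
       (auto simp: inj_on_def mid_weight_def mid_fixes_def mid_swaps_def odd_div_mod power2_eq_square)
  have disjoint: "?F1 \<inter> ?F2 = {}" "(?F1 \<union> ?F2) \<inter> ?F3 = {}" "(?F1 \<union> ?F2 \<union> ?F3) \<inter> ?F4 = {}"
    "(?F1 \<union> ?F2 \<union> ?F3 \<union> ?F4) \<inter> ?F5 = {}"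
    by (auto dest: arg_cong[where f = even])
  have "(mid_weight t x has_sum (t * (?G - 1) + t * (?G - 1) + t*x * ?G + t*x * ?G + t^2 * (?G - 1))) mid_shapes"
    unfolding mid_shapes_eq
    using has_sum_Un_disjoint[OF has_sum_Un_disjoint[OF has_sum_Un_disjoint[OF has_sum_Un_disjoint[OF
          F1 F2 disjoint(1)] F3 disjoint(2)] F4 disjoint(3)] F5 disjoint(4)] .
  moreover have "t * (?G - 1) + t * (?G - 1) + t*x * ?G + t*x * ?G + t^2 * (?G - 1) = mid_gf t x"
  proof -
    have "1 - x \<noteq> 0" using x by auto
    thus ?thesis unfolding mid_gf_def by (simp add: field_simps) algebra
  qed
  ultimately show ?thesis by simp
qed

section \<open>Permutations without peaks\<close>

definition no_peak :: "(nat \<Rightarrow> nat) \<Rightarrow> nat \<Rightarrow> bool" where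
  "no_peak \<beta> k \<longleftrightarrow> (\<forall>x y z. 1 \<le> x \<and> x < y \<and> y < z \<and> z \<le> k \<longrightarrow> \<not> (\<beta> x < \<beta> y \<and> \<beta> z < \<beta> y))"

definition valley_perms :: "nat \<Rightarrow> (nat \<Rightarrow> nat) set" where
  "valley_perms k = {\<beta>. \<beta> permutes {1..k} \<and> no_peak \<beta> k}"

definition prepend_max :: "nat \<Rightarrow> (nat \<Rightarrow> nat) \<Rightarrow> nat \<Rightarrow> nat" where
  "prepend_max k \<beta> i = (if i = 1 then k + 1 else if 2 \<le> i \<and> i \<le> k + 1 then \<beta> (i - 1) else i)"

lemma finite_valley_perms: "finite (valley_perms k)"
  by (rule finite_subset[OF _ finite_permutations[of "{1..k}"]]) (auto simp: valley_perms_def)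

lemma valley_perms_1: "valley_perms 1 = {id}"
  by (auto simp: valley_perms_def no_peak_def)

lemma valley_perms_permutes: "\<beta> \<in> valley_perms k \<Longrightarrow> \<beta> permutes {1..k}"
  by (simp add: valley_perms_def)

lemma valley_perms_in_range: "\<beta> \<in> valley_perms k \<Longrightarrow> i \<in> {1..k} \<Longrightarrow> \<beta> i \<in> {1..k}"
  by (metis valley_perms_permutes permutes_in_image)

lemma valley_perms_fixes: "\<beta> \<in> valley_perms k \<Longrightarrow> i \<notin> {1..k} \<Longrightarrow> \<beta> i = i"
  by (metis valley_perms_permutes permutes_not_in)

lemma valley_perms_no_peak:
  "\<beta> \<in> valley_perms k \<Longrightarrow> 1 \<le> x \<Longrightarrow> x < y \<Longrightarrow> y < z \<Longrightarrow> z \<le> k \<Longrightarrow> \<beta> x < \<beta> y \<Longrightarrow> \<beta> z < \<beta> y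
   \<Longrightarrow> False"
  unfolding valley_perms_def no_peak_def by blast

lemma valley_perms_extend:
  assumes \<beta>: "\<beta> \<in> valley_perms k"
  shows "\<beta> \<in> valley_perms (Suc k)"
proof -
  have "\<beta> permutes {1..Suc k}"
    using valley_perms_permutes[OF \<beta>] by (rule permutes_subset) auto
  moreover have "no_peak \<beta> (Suc k)"
    unfolding no_peak_def
  proof (intro allI impI notI, elim conjE)
    fix x y z assume xyz: "1 \<le> x" "x < y" "y < z" "z \<le> Suc k" "\<beta> x < \<beta> y" "\<beta> z < \<beta> y"
    show False
    proof (cases "z = Suc k")
      case True
      hence "\<beta> z = Suc k" using valley_perms_fixes[OF \<beta>] by simp
      moreover have "\<beta> y \<le> k" using valley_perms_in_range[OF \<beta>, of y] xyz True by auto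
      ultimately show False using xyz by auto
    next
      case False
      thus False using valley_perms_no_peak[OF \<beta>, of x y z] xyz by auto
    qed
  qed
  ultimately show ?thesis by (simp add: valley_perms_def)
qed

lemma prepend_max_1: "prepend_max k \<beta> 1 = Suc k"
  by (simp add: prepend_max_def)

lemma prepend_max_shift: "i \<in> {2..Suc k} \<Longrightarrow> prepend_max k \<beta> i = \<beta> (i - 1)"
  by (simp add: prepend_max_def)

lemma prepend_max_shift_range:
  assumes \<beta>: "\<beta> \<in> valley_perms k" and i: "i \<in> {2..Suc k}"
  shows "prepend_max k \<beta> i \<in> {1..k}"
proof -
  have "i - 1 \<in> {1..k}" using i by auto
  thus ?thesis using prepend_max_shift[OF i] valley_perms_in_range[OF \<beta>] by simp
qed

lemma prepend_max_permutes:
  assumes \<beta>: "\<beta> \<in> valley_perms k"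
  shows "prepend_max k \<beta> permutes {1..Suc k}"
proof (rule inj_imp_permutes)
  note shifted = prepend_max_shift_range[OF \<beta>]
  show "inj_on (prepend_max k \<beta>) {1..Suc k}"
  proof (rule inj_onI)
    fix i j assume ij: "i \<in> {1..Suc k}" "j \<in> {1..Suc k}" "prepend_max k \<beta> i = prepend_max k \<beta> j"
    show "i = j"
    proof (cases "i = 1 \<or> j = 1")
      case True
      thus ?thesis using ij prepend_max_1 shifted[of i] shifted[of j] by force
    next
      case False
      hence "\<beta> (i - 1) = \<beta> (j - 1)" using ij prepend_max_shift by simp
      hence "i - 1 = j - 1" by (rule injD[OF permutes_inj[OF valley_perms_permutes[OF \<beta>]]])
      thus ?thesis using ij(1,2) by auto
    qed
  qed
  show "prepend_max k \<beta> i \<in> {1..Suc k}" if "i \<in> {1..Suc k}" for i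
    using that prepend_max_1 shifted[of i] by (cases "i = 1") auto
  show "prepend_max k \<beta> i = i" if "i \<notin> {1..Suc k}" for i
    using that by (auto simp: prepend_max_def)
qed simp

lemma prepend_max_valley_perms:
  assumes \<beta>: "\<beta> \<in> valley_perms k"
  shows "prepend_max k \<beta> \<in> valley_perms (Suc k)"
proof -
  have "no_peak (prepend_max k \<beta>) (Suc k)"
    unfolding no_peak_def
  proof (intro allI impI notI, elim conjE)
    fix x y z assume xyz: "1 \<le> x" "x < y" "y < z" "z \<le> Suc k"
      and peak: "prepend_max k \<beta> x < prepend_max k \<beta> y" "prepend_max k \<beta> z < prepend_max k \<beta> y"
    show False
    proof (cases "x = 1")
      case True
      thus False using prepend_max_shift_range[OF \<beta>, of y] prepend_max_1 xyz peak(1) by simp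
    next
      case False
      hence "\<beta> (x - 1) < \<beta> (y - 1)" "\<beta> (z - 1) < \<beta> (y - 1)" using prepend_max_shift xyz peak by simp_all
      moreover have "1 \<le> x - 1" "x - 1 < y - 1" "y - 1 < z - 1" "z - 1 \<le> k" using xyz False by auto
      ultimately show False using valley_perms_no_peak[OF \<beta>] by blast
    qed
  qed
  thus ?thesis using prepend_max_permutes[OF \<beta>] by (simp add: valley_perms_def)
qed

lemma valley_perms_max_at_end:
  assumes \<beta>: "\<beta> \<in> valley_perms (Suc k)" and k: "1 \<le> k"
  shows "\<beta> (Suc k) = Suc k \<or> \<beta> 1 = Suc k"
proof (rule ccontr)
  assume ends: "\<not> (\<beta> (Suc k) = Suc k \<or> \<beta> 1 = Suc k)"
  have perm: "\<beta> permutes {1..Suc k}" by (rule valley_perms_permutes[OF \<beta>])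
  have "Suc k \<in> \<beta> ` {1..Suc k}" using permutes_image[OF perm] by simp
  then obtain j where j: "j \<in> {1..Suc k}" "\<beta> j = Suc k" by auto
  have below: "\<beta> i < Suc k" if "i \<in> {1..Suc k}" and "\<beta> i \<noteq> Suc k" for i
    using valley_perms_in_range[OF \<beta> that(1)] that(2) by auto
  have "1 < j" "j < Suc k" using j ends by (auto simp: le_less)
  moreover have "\<beta> 1 < \<beta> j" "\<beta> (Suc k) < \<beta> j" using below[of 1] below[of "Suc k"] ends j k by auto
  ultimately show False using valley_perms_no_peak[OF \<beta>, of 1 j "Suc k"] by auto
qed

lemma valley_perms_drop_last:
  assumes \<beta>: "\<beta> \<in> valley_perms (Suc k)" and last: "\<beta> (Suc k) = Suc k"
  shows "\<beta> \<in> valley_perms k"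
proof -
  have "\<beta> permutes {1..k}"
  proof (rule permutes_superset[OF valley_perms_permutes[OF \<beta>]])
    show "x \<in> {1..Suc k} - {1..k} \<Longrightarrow> \<beta> x = x" for x using last le_Suc_eq by auto
  qed
  moreover have "no_peak \<beta> k"
    using valley_perms_no_peak[OF \<beta>] unfolding no_peak_def by (meson le_SucI)
  ultimately show ?thesis by (simp add: valley_perms_def)
qed

lemma valley_perms_drop_first:
  assumes \<beta>: "\<beta> \<in> valley_perms (Suc k)" and first: "\<beta> 1 = Suc k"
  shows "\<beta> \<in> prepend_max k ` valley_perms k"
proof -
  have perm: "\<beta> permutes {1..Suc k}" by (rule valley_perms_permutes[OF \<beta>])
  define \<gamma> where "\<gamma> i = (if i \<in> {1..k} then \<beta> (i + 1) else i)" for i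
  have inj: "\<beta> x = \<beta> y \<Longrightarrow> x = y" for x y using permutes_inj[OF perm] by (metis injD)
  have "\<gamma> permutes {1..k}"
  proof (rule inj_imp_permutes)
    show "inj_on \<gamma> {1..k}" by (rule inj_onI) (use inj in \<open>auto simp: \<gamma>_def\<close>)
    show "\<gamma> i \<in> {1..k}" if "i \<in> {1..k}" for i
    proof -
      have "\<beta> (i + 1) \<in> {1..Suc k}" using valley_perms_in_range[OF \<beta>, of "i + 1"] that by auto
      moreover have "\<beta> (i + 1) \<noteq> Suc k" using inj[of "i + 1" 1] first that by auto
      ultimately show ?thesis using that by (auto simp: \<gamma>_def)
    qed
  qed (auto simp: \<gamma>_def)
  moreover have "no_peak \<gamma> k"
    unfolding no_peak_def
  proof (intro allI impI notI, elim conjE)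
    fix x y z assume xyz: "1 \<le> x" "x < y" "y < z" "z \<le> k" "\<gamma> x < \<gamma> y" "\<gamma> z < \<gamma> y"
    thus False using valley_perms_no_peak[OF \<beta>, of "x + 1" "y + 1" "z + 1"] by (auto simp: \<gamma>_def)
  qed
  ultimately have "\<gamma> \<in> valley_perms k" by (simp add: valley_perms_def)
  moreover have "prepend_max k \<gamma> = \<beta>"
  proof
    fix i show "prepend_max k \<gamma> i = \<beta> i"
      using first permutes_not_in[OF perm, of i] by (auto simp: prepend_max_def \<gamma>_def)
  qed
  ultimately show ?thesis by blast
qed

lemma valley_perms_Suc:
  assumes "1 \<le> k"
  shows "valley_perms (Suc k) = valley_perms k \<union> prepend_max k ` valley_perms k"
proof
  show "valley_perms (Suc k) \<subseteq> valley_perms k \<union> prepend_max k ` valley_perms k"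
  proof
    fix \<beta> assume \<beta>: "\<beta> \<in> valley_perms (Suc k)"
    consider "\<beta> (Suc k) = Suc k" | "\<beta> 1 = Suc k" using valley_perms_max_at_end[OF \<beta> assms] by blast
    thus "\<beta> \<in> valley_perms k \<union> prepend_max k ` valley_perms k"
    proof cases
      case 1
      thus ?thesis using valley_perms_drop_last[OF \<beta>] by simp
    next
      case 2
      thus ?thesis using valley_perms_drop_first[OF \<beta>] by simp
    qed
  qed
  show "valley_perms k \<union> prepend_max k ` valley_perms k \<subseteq> valley_perms (Suc k)"
    using valley_perms_extend prepend_max_valley_perms by blast
qed

lemma card_valley_perms: "1 \<le> k \<Longrightarrow> card (valley_perms k) = 2 ^ (k - 1)"
proof (induction k rule: dec_induct)
  case base
  thus ?case using valley_perms_1 by simp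
next
  case (step k)
  have "valley_perms k \<inter> prepend_max k ` valley_perms k = {}"
    using valley_perms_in_range[of _ k 1] step(1) by (fastforce simp: prepend_max_def)
  moreover have "inj_on (prepend_max k) (valley_perms k)"
  proof (rule inj_onI)
    fix \<beta> \<gamma> assume \<beta>\<gamma>: "\<beta> \<in> valley_perms k" "\<gamma> \<in> valley_perms k" "prepend_max k \<beta> = prepend_max k \<gamma>"
    show "\<beta> = \<gamma>"
    proof
      fix i show "\<beta> i = \<gamma> i"
        using fun_cong[OF \<beta>\<gamma>(3), of "i + 1"] valley_perms_fixes[OF \<beta>\<gamma>(1), of i] valley_perms_fixes[OF \<beta>\<gamma>(2), of i]
        by (cases "i \<in> {1..k}") (auto simp: prepend_max_def)
    qed
  qed
  ultimately have "card (valley_perms (Suc k)) = 2 * card (valley_perms k)"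
    unfolding valley_perms_Suc[OF step(1)]
    by (simp add: card_Un_disjoint finite_valley_perms card_image)
  thus ?case using step by (cases k) auto
qed

lemma has_sum_valley_perms:
  fixes y :: real
  assumes y: "\<bar>y\<bar> < 1/2"
  shows "((\<lambda>(k, \<beta>). y ^ k) has_sum (y / (1 - 2*y))) (Sigma {1..} valley_perms)"
proof -
  have outer: "((\<lambda>k. 2 ^ (k - 1) * z ^ k) has_sum (z / (1 - 2*z))) {1..}" if "\<bar>z\<bar> < 1/2" for z :: real
  proof -
    have "((\<lambda>k. (1/2) * (2*z) ^ k) has_sum (1/2) * (2*z / (1 - 2*z))) {1..}"
      using that by (intro has_sum_cmult_right has_sum_geometric_from_1) simp
    moreover have "(1/2) * (2*z) ^ k = 2 ^ (k - 1) * z ^ k" if "k \<in> {1..}" for k :: nat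
      using that by (cases k) (auto simp: power_mult_distrib)
    ultimately have "((\<lambda>k. 2 ^ (k - 1) * z ^ k) has_sum (1/2) * (2*z / (1 - 2*z))) {1..}"
      using has_sum_cong[of "{1..}" "\<lambda>k. (1/2) * (2*z) ^ k" "\<lambda>k. 2 ^ (k - 1) * z ^ k"] by blast
    thus ?thesis by simp
  qed
  show ?thesis
  proof (rule has_sum_Sigma_real[where g = "\<lambda>k. 2 ^ (k - 1) * y ^ k" and G = "\<lambda>k. 2 ^ (k - 1) * \<bar>y\<bar> ^ k"])
    fix k :: nat assume "k \<in> {1..}"
    hence card: "card (valley_perms k) = 2 ^ (k - 1)" by (simp add: card_valley_perms)
    show "((\<lambda>\<beta>. (\<lambda>(k, \<beta>). y ^ k) (k, \<beta>)) has_sum 2 ^ (k - 1) * y ^ k) (valley_perms k)"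
      by (rule has_sum_finiteI) (simp_all add: finite_valley_perms card)
    show "((\<lambda>\<beta>. \<bar>(\<lambda>(k, \<beta>). y ^ k) (k, \<beta>)\<bar>) has_sum 2 ^ (k - 1) * \<bar>y\<bar> ^ k) (valley_perms k)"
      by (rule has_sum_finiteI) (simp_all add: finite_valley_perms card power_abs)
  next
    show "((\<lambda>k. 2 ^ (k - 1) * y ^ k) has_sum y / (1 - 2*y)) {1..}" by (rule outer[OF y])
    show "(\<lambda>k. 2 ^ (k - 1) * \<bar>y\<bar> ^ k) summable_on {1..}"
      using outer[of "\<bar>y\<bar>"] y by (auto simp: has_sum_iff)
  qed
qed

section \<open>Cycle counts of permutations with cycles of length at most three\<close>

lemma orb_involution:
  assumes "p (p i) = i"
  shows "orb p i = {i, p i}"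
proof -
  have "(p ^^ m) i \<in> {i, p i}" for m
    by (induction m) (auto simp: assms)
  moreover have "i = (p ^^ 0) i" "p i = (p ^^ 1) i" by simp_all
  ultimately show ?thesis unfolding orb_def by blast
qed

lemma orb_order_3:
  assumes "p (p (p i)) = i"
  shows "orb p i = {i, p i, p (p i)}"
proof -
  have "(p ^^ m) i \<in> {i, p i, p (p i)}" for m
    by (induction m) (auto simp: assms)
  moreover have "i = (p ^^ 0) i" "p i = (p ^^ 1) i" "p (p i) = (p ^^ 2) i"
    by (simp_all add: numeral_2_eq_2)
  ultimately show ?thesis unfolding orb_def by blast
qed

lemma card_orb_short:
  assumes "p (p i) = i \<or> p (p (p i)) = i"
  shows "card (orb p i) = 1 \<longleftrightarrow> p i = i"
    and "card (orb p i) = 2 \<longleftrightarrow> p i \<noteq> i \<and> p (p i) = i"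
    and "card (orb p i) = 3 \<longleftrightarrow> p (p i) \<noteq> i"
proof -
  have "card (orb p i) = (if p i = i then 1 else if p (p i) = i then 2 else 3)"
  proof (cases "p (p i) = i")
    case True
    thus ?thesis using orb_involution[of p i] by auto
  next
    case False
    hence "p (p (p i)) = i" using assms by auto
    moreover from this have "p i \<noteq> i" "p (p i) \<noteq> p i" using False by metis+
    ultimately show ?thesis using orb_order_3[of p i] False by auto
  qed
  thus "card (orb p i) = 1 \<longleftrightarrow> p i = i"
    and "card (orb p i) = 2 \<longleftrightarrow> p i \<noteq> i \<and> p (p i) = i"
    and "card (orb p i) = 3 \<longleftrightarrow> p (p i) \<noteq> i"
    by auto
qed

lemma ncyc_1_eq_card_fixpoints:
  assumes short: "\<forall>i\<in>{1..n}. p (p i) = i \<or> p (p (p i)) = i"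
  shows "ncyc 1 p n = card {i\<in>{1..n}. p i = i}"
proof -
  have "{orb p i | i. i \<in> {1..n} \<and> card (orb p i) = 1} = (\<lambda>i. {i}) ` {i\<in>{1..n}. p i = i}"
  proof (intro equalityI subsetI)
    fix X assume "X \<in> {orb p i | i. i \<in> {1..n} \<and> card (orb p i) = 1}"
    then obtain i where i: "X = orb p i" "i \<in> {1..n}" "card (orb p i) = 1" by blast
    hence "p i = i" using card_orb_short(1) short by blast
    moreover have "X = {i}" using i(1) orb_involution[of p i] \<open>p i = i\<close> by simp
    ultimately show "X \<in> (\<lambda>i. {i}) ` {i\<in>{1..n}. p i = i}" using i(2) by blast
  next
    fix X assume "X \<in> (\<lambda>i. {i}) ` {i\<in>{1..n}. p i = i}"
    then obtain i where i: "X = {i}" "i \<in> {1..n}" "p i = i" by blast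
    have "orb p i = {i}" using orb_involution[of p i] i(3) by simp
    hence "X = orb p i" "card (orb p i) = 1" using i(1) by simp_all
    thus "X \<in> {orb p i | i. i \<in> {1..n} \<and> card (orb p i) = 1}" using i(2) by blast
  qed
  moreover have "inj_on (\<lambda>i. {i}) {i\<in>{1..n}. p i = i}" by (auto simp: inj_on_def)
  ultimately show ?thesis unfolding ncyc_def by (simp add: card_image)
qed

lemma ncyc_2_eq_card_swaps:
  assumes short: "\<forall>i\<in>{1..n}. p (p i) = i \<or> p (p (p i)) = i"
    and maps: "\<forall>i\<in>{1..n}. p i \<in> {1..n}"
  shows "ncyc 2 p n = card {i\<in>{1..n}. i < p i \<and> p (p i) = i}"
proof -
  let ?S = "{i\<in>{1..n}. i < p i \<and> p (p i) = i}"
  have "{orb p i | i. i \<in> {1..n} \<and> card (orb p i) = 2} = (\<lambda>i. {i, p i}) ` ?S"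
  proof (intro equalityI subsetI)
    fix X assume "X \<in> {orb p i | i. i \<in> {1..n} \<and> card (orb p i) = 2}"
    then obtain i where i: "X = orb p i" "i \<in> {1..n}" "card (orb p i) = 2" by blast
    hence swap: "p i \<noteq> i" "p (p i) = i" using card_orb_short(2) short by blast+
    have X: "X = {i, p i}" using i orb_involution[of p i] swap by simp
    show "X \<in> (\<lambda>i. {i, p i}) ` ?S"
    proof (cases "i < p i")
      case True
      thus ?thesis using X swap i by auto
    next
      case False
      hence "p i < p (p i)" "X = {p i, p (p i)}" "p i \<in> {1..n}" using X swap maps i by auto
      thus ?thesis using swap by (auto intro!: image_eqI[where x = "p i"])
    qed
  next
    fix X assume "X \<in> (\<lambda>i. {i, p i}) ` ?S"
    then obtain i where i: "X = {i, p i}" "i \<in> {1..n}" "i < p i" "p (p i) = i" by blast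
    hence "card (orb p i) = 2" using card_orb_short(2)[of p i] by auto
    thus "X \<in> {orb p i | i. i \<in> {1..n} \<and> card (orb p i) = 2}" using orb_involution[of p i] i by auto
  qed
  moreover have "inj_on (\<lambda>i. {i, p i}) ?S"
    by (rule inj_onI) (auto simp: doubleton_eq_iff)
  ultimately show ?thesis unfolding ncyc_def by (simp add: card_image)
qed

lemma three_cycles_orb:
  assumes "(a, b, c) \<in> three_cycles p"
  shows "orb p a = {a, b, c}" and "orb p b = {a, b, c}" and "orb p c = {a, b, c}"
    and "card {a, b, c} = 3"
proof -
  from assms have t: "a < b" "b < c" "p a = c" "p c = b" "p b = a" by (auto simp: three_cycles_def)
  show "orb p a = {a, b, c}" using orb_order_3[of p a] t by auto
  show "orb p b = {a, b, c}" using orb_order_3[of p b] t by auto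
  show "orb p c = {a, b, c}" using orb_order_3[of p c] t by auto
  show "card {a, b, c} = 3" using t by auto
qed

lemma ncyc_3_eq_card_three_cycles:
  assumes covered: "\<forall>i\<in>{1..n}. card (orb p i) = 3 \<longrightarrow> (\<exists>(a, b, c)\<in>three_cycles p. i \<in> {a, b, c})"
    and inside: "\<forall>(a, b, c)\<in>three_cycles p. a \<in> {1..n}"
  shows "ncyc 3 p n = card (three_cycles p)"
proof -
  have "{orb p i | i. i \<in> {1..n} \<and> card (orb p i) = 3} = (\<lambda>(a, b, c). {a, b, c}) ` three_cycles p"
  proof (intro equalityI subsetI)
    fix X assume "X \<in> {orb p i | i. i \<in> {1..n} \<and> card (orb p i) = 3}"
    then obtain i where i: "X = orb p i" "i \<in> {1..n}" "card (orb p i) = 3" by blast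
    then obtain a b c where t: "(a, b, c) \<in> three_cycles p" "i \<in> {a, b, c}" using covered by blast
    hence "X = {a, b, c}" using three_cycles_orb[OF t(1)] i(1) by auto
    thus "X \<in> (\<lambda>(a, b, c). {a, b, c}) ` three_cycles p" using t(1) by force
  next
    fix X assume "X \<in> (\<lambda>(a, b, c). {a, b, c}) ` three_cycles p"
    then obtain a b c where t: "(a, b, c) \<in> three_cycles p" "X = {a, b, c}" by auto
    have "a \<in> {1..n}" using inside t(1) by blast
    moreover have "X = orb p a" "card (orb p a) = 3" using three_cycles_orb[OF t(1)] t(2) by simp_all
    ultimately show "X \<in> {orb p i | i. i \<in> {1..n} \<and> card (orb p i) = 3}" by blast
  qed
  moreover have "inj_on (\<lambda>(a, b, c). {a, b, c}) (three_cycles p)"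
  proof (rule inj_onI)
    fix x y assume x: "x \<in> three_cycles p" and y: "y \<in> three_cycles p"
      and eq: "(\<lambda>(a, b, c). {a, b, c}) x = (\<lambda>(a, b, c). {a, b, c}) y"
    obtain a b c a' b' c' where xy: "x = (a, b, c)" "y = (a', b', c')" by (cases x, cases y) auto
    have "a = Min {a, b, c}" using x xy by (auto simp: three_cycles_def)
    also have "\<dots> = Min {a', b', c'}" using eq xy by simp
    also have "\<dots> = a'" using y xy by (auto simp: three_cycles_def)
    finally have "a = a'" .
    thus "x = y" using x y xy by (auto simp: three_cycles_def)
  qed
  ultimately show ?thesis unfolding ncyc_def by (simp add: card_image)
qed

lemma inj_on_if_funpow_id:
  assumes "0 < m" and "\<And>x. x \<in> S \<Longrightarrow> (f ^^ m) x = x"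
  shows "inj_on f S"
proof (rule inj_onI)
  fix x y assume xy: "x \<in> S" "y \<in> S" "f x = f y"
  obtain m' where m: "m = Suc m'" using assms(1) by (cases m) auto
  have "x = (f ^^ m') (f x)" using assms(2)[OF xy(1)] by (simp add: m funpow_Suc_right del: funpow.simps)
  also have "\<dots> = y" using assms(2)[OF xy(2)] xy(3) by (simp add: m funpow_Suc_right del: funpow.simps)
  finally show "x = y" .
qed

section \<open>Assembling a permutation of \<open>R\<close>\<close>

definition blockB :: "(nat \<times> nat \<times> nat) set \<Rightarrow> nat set" where
  "blockB S = (\<lambda>(a, b, c). b) ` S"

definition mid_pos :: "nat \<Rightarrow> nat \<Rightarrow> nat \<Rightarrow> nat" where
  "mid_pos k g1 u = (if u \<le> g1 then u + k else u + 2*k)"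

definition mid_index :: "nat \<Rightarrow> nat \<Rightarrow> nat \<Rightarrow> nat" where
  "mid_index k g1 i = (if i \<le> k + g1 then i - k else i - 2*k)"

text \<open>The middle positions \<open>k+1..k+g1\<close> and \<open>2k+g1+1..2k+g1+g2\<close> lie on either side of block B;
  \<^const>\<open>mid_pos\<close> and \<^const>\<open>mid_index\<close> renumber them as \<open>1..g1+g2\<close>.\<close>

lemma mid_index_mid_pos [simp]: "mid_index k g1 (mid_pos k g1 u) = u"
  by (auto simp: mid_index_def mid_pos_def)

lemma mid_pos_less_iff [simp]: "mid_pos k g1 u < mid_pos k g1 v \<longleftrightarrow> u < v"
  by (auto simp: mid_pos_def)

lemma mid_pos_eq_iff [simp]: "mid_pos k g1 u = mid_pos k g1 v \<longleftrightarrow> u = v"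
  by (auto simp: mid_pos_def)

lemma mid_pos_le_iff: "mid_pos k g1 u \<le> k + g1 \<longleftrightarrow> u \<le> g1"
  by (auto simp: mid_pos_def)

definition crossing_perm :: "nat \<Rightarrow> (nat \<Rightarrow> nat) \<Rightarrow> nat \<Rightarrow> nat \<Rightarrow> bool \<Rightarrow> nat \<Rightarrow> nat" where
  "crossing_perm k \<beta> g1 g2 b i =
    (if i < 1 \<or> 3*k + g1 + g2 < i then i
     else if i \<le> k then 3*k + g1 + g2 + 1 - i
     else if i \<le> k + g1 then mid_pos k g1 (mid_inv g1 g2 b (mid_index k g1 i))
     else if i \<le> 2*k + g1 then \<beta> (i - k - g1)
     else if i \<le> 2*k + g1 + g2 then mid_pos k g1 (mid_inv g1 g2 b (mid_index k g1 i))
     else k + g1 + inv \<beta> (3*k + g1 + g2 + 1 - i))"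

locale crossing_assembly =
  fixes k :: nat and \<beta> :: "nat \<Rightarrow> nat" and g1 g2 :: nat and b :: bool
  assumes k_pos: "1 \<le> k" and valley: "\<beta> \<in> valley_perms k"
begin

abbreviation "n \<equiv> 3*k + g1 + g2"
abbreviation "p \<equiv> crossing_perm k \<beta> g1 g2 b"
abbreviation "in_mid i \<equiv> (k < i \<and> i \<le> k + g1) \<or> (2*k + g1 < i \<and> i \<le> 2*k + g1 + g2)"

lemma \<beta>_permutes: "\<beta> permutes {1..k}"
  using valley by (rule valley_perms_permutes)

lemma \<beta>_range: "x \<in> {1..k} \<Longrightarrow> \<beta> x \<in> {1..k}"
  using valley by (rule valley_perms_in_range)

lemma inv_\<beta>_range: "x \<in> {1..k} \<Longrightarrow> inv \<beta> x \<in> {1..k}"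
  by (metis permutes_inv[OF \<beta>_permutes] permutes_in_image)

lemma \<beta>_inv_\<beta> [simp]: "\<beta> (inv \<beta> x) = x"
  using \<beta>_permutes permutes_inverses(1) by fastforce

lemma inv_\<beta>_\<beta> [simp]: "inv \<beta> (\<beta> x) = x"
  using \<beta>_permutes permutes_inverses(2) by fastforce

lemma p_outside: "i < 1 \<or> n < i \<Longrightarrow> p i = i"
  by (simp add: crossing_perm_def)

lemma p_A: "1 \<le> i \<Longrightarrow> i \<le> k \<Longrightarrow> p i = n + 1 - i"
  by (simp add: crossing_perm_def)

lemma p_B: "k + g1 < i \<Longrightarrow> i \<le> 2*k + g1 \<Longrightarrow> p i = \<beta> (i - k - g1)"
  by (simp add: crossing_perm_def)

lemma p_C: "2*k + g1 + g2 < i \<Longrightarrow> i \<le> n \<Longrightarrow> p i = k + g1 + inv \<beta> (n + 1 - i)"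
  by (simp add: crossing_perm_def)

lemma p_mid: "in_mid i \<Longrightarrow> p i = mid_pos k g1 (mid_inv g1 g2 b (mid_index k g1 i))"
  by (auto simp: crossing_perm_def)

lemma mid_index_range: "in_mid i \<Longrightarrow> mid_index k g1 i \<in> {1..g1+g2}"
  by (auto simp: mid_index_def)

lemma mid_pos_mid_index: "in_mid i \<Longrightarrow> mid_pos k g1 (mid_index k g1 i) = i"
  by (auto simp: mid_index_def mid_pos_def)

lemma in_mid_mid_pos: "u \<in> {1..g1+g2} \<Longrightarrow> in_mid (mid_pos k g1 u)"
  by (auto simp: mid_pos_def)

lemma mid_index_le_iff: "in_mid i \<Longrightarrow> mid_index k g1 i \<le> g1 \<longleftrightarrow> i \<le> k + g1"
  by (auto simp: mid_index_def)

lemma mid_index_less: "in_mid i \<Longrightarrow> in_mid j \<Longrightarrow> i < j \<Longrightarrow> mid_index k g1 i < mid_index k g1 j"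
  by (auto simp: mid_index_def)

lemma p_mid_in_mid: "in_mid i \<Longrightarrow> in_mid (p i)"
  using p_mid in_mid_mid_pos mid_inv_range mid_index_range by metis

lemma p_mid_involution: "in_mid i \<Longrightarrow> p (p i) = i"
  using p_mid[OF p_mid_in_mid] p_mid mid_index_range mid_inv_range mid_inv_involution mid_pos_mid_index
  by (metis mid_index_mid_pos)

lemma p_A_range: "1 \<le> i \<Longrightarrow> i \<le> k \<Longrightarrow> 2*k + g1 + g2 < p i \<and> p i \<le> n"
  using p_A by auto

lemma p_B_range:
  assumes "k + g1 < i" "i \<le> 2*k + g1"
  shows "1 \<le> p i \<and> p i \<le> k"
proof -
  have "i - k - g1 \<in> {1..k}" using assms by auto
  thus ?thesis using p_B[OF assms] \<beta>_range by simp
qed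

lemma p_C_range:
  assumes "2*k + g1 + g2 < i" "i \<le> n"
  shows "k + g1 < p i \<and> p i \<le> 2*k + g1"
proof -
  have "n + 1 - i \<in> {1..k}" using assms by auto
  hence "inv \<beta> (n + 1 - i) \<in> {1..k}" by (rule inv_\<beta>_range)
  thus ?thesis using p_C[OF assms] by simp
qed

lemma position_cases:
  assumes "1 \<le> i"
  obtains "i \<le> k" | "in_mid i" | "k + g1 < i \<and> i \<le> 2*k + g1" | "2*k + g1 + g2 < i"
  using assms by linarith

lemma p_three_cycle:
  assumes "a \<in> {1..k}"
  shows "p a = n + 1 - a" and "p (n + 1 - a) = k + g1 + inv \<beta> a" and "p (k + g1 + inv \<beta> a) = a"
proof -
  show "p a = n + 1 - a" using p_A assms by auto
  show "p (n + 1 - a) = k + g1 + inv \<beta> a" using p_C[of "n + 1 - a"] assms by auto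
  show "p (k + g1 + inv \<beta> a) = a" using p_B[of "k + g1 + inv \<beta> a"] inv_\<beta>_range[OF assms] by auto
qed

lemma three_cycle_bounds:
  assumes "a \<in> {1..k}"
  shows "a < k + g1 + inv \<beta> a" and "k + g1 + inv \<beta> a \<le> 2*k + g1" and "2*k + g1 + g2 < n + 1 - a"
  using inv_\<beta>_range[OF assms] assms by auto

lemma not_mid_in_three_cycle:
  assumes "i \<in> {1..n}" and "\<not> in_mid i"
  obtains a where "a \<in> {1..k}" and "i = a \<or> i = k + g1 + inv \<beta> a \<or> i = n + 1 - a"
proof -
  from assms(1) have "1 \<le> i" by simp
  thus ?thesis
  proof (cases rule: position_cases)
    case 1
    thus ?thesis using assms that by auto
  next
    case 2
    thus ?thesis using assms by auto
  next
    case 3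
    hence "i - k - g1 \<in> {1..k}" by auto
    hence "\<beta> (i - k - g1) \<in> {1..k}" by (rule \<beta>_range)
    moreover have "i = k + g1 + inv \<beta> (\<beta> (i - k - g1))" using 3 by simp
    ultimately show ?thesis using that by blast
  next
    case 4
    hence "n + 1 - i \<in> {1..k}" "i = n + 1 - (n + 1 - i)" using assms by auto
    thus ?thesis using that by blast
  qed
qed

lemma three_cycles_eq: "three_cycles p = (\<lambda>a. (a, k + g1 + inv \<beta> a, n + 1 - a)) ` {1..k}"
proof (intro equalityI subsetI)
  fix x assume "x \<in> three_cycles p"
  then obtain a b' c where x: "x = (a, b', c)" "a < b'" "b' < c" "p a = c" "p c = b'" "p b' = a"
    by (cases x) (auto simp: three_cycles_def)
  have a: "1 \<le> a" "a \<le> n" using p_outside[of a] x by (metis less_irrefl not_le_imp_less)+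
  have "a \<le> k"
  proof (rule ccontr)
    assume "\<not> a \<le> k"
    from a(1) show False
    proof (cases rule: position_cases)
      case 2 thus False using p_mid_involution[OF 2] x by auto
    next
      case 3 thus False using p_B_range[of a] x by auto
    next
      case 4 thus False using p_C_range[of a] x a by auto
    qed (use \<open>\<not> a \<le> k\<close> in auto)
  qed
  hence "a \<in> {1..k}" using a by auto
  thus "x \<in> (\<lambda>a. (a, k + g1 + inv \<beta> a, n + 1 - a)) ` {1..k}" using x p_three_cycle[of a] by auto
next
  fix x assume "x \<in> (\<lambda>a. (a, k + g1 + inv \<beta> a, n + 1 - a)) ` {1..k}"
  then obtain a where a: "a \<in> {1..k}" "x = (a, k + g1 + inv \<beta> a, n + 1 - a)" by auto
  thus "x \<in> three_cycles p"
    using p_three_cycle[OF a(1)] three_cycle_bounds[OF a(1)] by (auto simp: three_cycles_def)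
qed

lemma card_three_cycles: "card (three_cycles p) = k"
proof -
  have "inj_on (\<lambda>a. (a, k + g1 + inv \<beta> a, n + 1 - a)) {1..k}" by (auto simp: inj_on_def)
  thus ?thesis unfolding three_cycles_eq by (simp add: card_image)
qed

lemma blockB_three_cycles: "blockB (three_cycles p) = {k + g1 + 1..2*k + g1}"
proof -
  have "inv \<beta> ` {1..k} = {1..k}" by (rule permutes_image[OF permutes_inv[OF \<beta>_permutes]])
  hence "(\<lambda>a. k + g1 + inv \<beta> a) ` {1..k} = (+) (k + g1) ` {1..k}" by (metis image_image)
  thus ?thesis by (simp add: blockB_def three_cycles_eq image_image)
qed

lemma p_short_cycles: "p (p i) = i \<or> p (p (p i)) = i"
proof (cases "i \<in> {1..n} \<and> \<not> in_mid i")
  case True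
  then obtain a where "a \<in> {1..k}" "i = a \<or> i = k + g1 + inv \<beta> a \<or> i = n + 1 - a"
    using not_mid_in_three_cycle by blast
  thus ?thesis using p_three_cycle by auto
next
  case False
  thus ?thesis using p_mid_involution p_outside by (cases "in_mid i") auto
qed

lemma p_maps:
  assumes i: "i \<in> {1..n}"
  shows "p i \<in> {1..n}"
proof -
  from i have "1 \<le> i" by simp
  thus ?thesis
  proof (cases rule: position_cases)
    case 1 thus ?thesis using i p_A_range[of i] by auto
  next
    case 2 thus ?thesis using p_mid_in_mid[OF 2] by auto
  next
    case 3 thus ?thesis using p_B_range[of i] by auto
  next
    case 4 thus ?thesis using p_C_range[of i] i by auto
  qed
qed

lemma p_permutes: "p permutes {1..n}"
proof (rule inj_imp_permutes)
  have "(p ^^ 6) i = i" for i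
    using p_short_cycles[of i] by (auto simp: numeral_eq_Suc)
  thus "inj_on p {1..n}" by (intro inj_on_if_funpow_id[of 6]) auto
qed (use p_maps p_outside in auto)

lemma mid_ascent_stays_in_mid:
  assumes x: "in_mid x" and xyz: "x < y" "y < z" "z \<le> n" and v: "p z < p x" "p x < p y"
  shows "in_mid y"
proof (rule ccontr)
  have px: "in_mid (p x)" by (rule p_mid_in_mid[OF x])
  assume "\<not> in_mid y"
  hence "(k + g1 < y \<and> y \<le> 2*k + g1) \<or> 2*k + g1 + g2 < y" using x xyz by auto
  thus False
  proof
    assume "k + g1 < y \<and> y \<le> 2*k + g1"
    thus False using p_B_range[of y] px v by auto
  next
    assume "2*k + g1 + g2 < y"
    thus False using p_C_range[of y] p_C_range[of z] px v xyz by auto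
  qed
qed

lemma mid_start_avoids_231:
  assumes x: "in_mid x" and xyz: "x < y" "y < z" "z \<le> n" and v: "p z < p x" "p x < p y"
  shows False
proof -
  have y: "in_mid y" by (rule mid_ascent_stays_in_mid[OF assms])
  have ux: "mid_index k g1 x \<in> {1..g1+g2}" and uy: "mid_index k g1 y \<in> {1..g1+g2}"
    using mid_index_range x y by auto
  have up: "mid_inv g1 g2 b (mid_index k g1 x) < mid_inv g1 g2 b (mid_index k g1 y)"
    using v(2) p_mid[OF x] p_mid[OF y] by simp
  have two: "b \<and> mid_index k g1 x \<le> g1 \<and> g1 < mid_index k g1 y"
    by (rule mid_inv_ascent[OF ux uy mid_index_less[OF x y xyz(1)] up])
  consider "in_mid z" | "k + g1 < z \<and> z \<le> 2*k + g1" | "2*k + g1 + g2 < z" using xyz y by linarith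
  thus False
  proof cases
    case 1
    have "mid_inv g1 g2 b (mid_index k g1 z) < mid_inv g1 g2 b (mid_index k g1 x)"
      using v(1) p_mid[OF x] p_mid[OF 1] by simp
    thus False
      using mid_inv_avoids_231[OF ux mid_index_range[OF 1] mid_index_less[OF x y xyz(1)]
          mid_index_less[OF y 1 xyz(2)] _ up] by blast
  next
    case 2
    hence "y \<le> k + g1" using y xyz by auto
    hence "mid_index k g1 y \<le> g1" using mid_index_le_iff[OF y] by simp
    thus False using two by auto
  next
    case 3
    have "k + g1 < p x" using p_C_range[of z] 3 xyz v by auto
    hence "\<not> mid_inv g1 g2 b (mid_index k g1 x) \<le> g1"
      using p_mid[OF x] mid_pos_le_iff[of k g1 "mid_inv g1 g2 b (mid_index k g1 x)"] by linarith
    thus False using mid_inv_le_iff[of b "mid_index k g1 x"] two ux by auto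
  qed
qed

lemma p_avoids_231: "avoids231 p n"
  unfolding avoids231_def
proof (intro notI, elim exE conjE)
  fix x y z assume xyz: "1 \<le> x" "x < y" "y < z" "z \<le> n" and v: "p z < p x" "p x < p y"
  from xyz(1) show False
  proof (cases rule: position_cases)
    case 1
    have "2*k + g1 + g2 < p y" using p_A_range[of x] 1 xyz v by auto
    hence "y \<le> k"
      using p_B_range[of y] p_C_range[of y] p_mid_in_mid[of y] xyz by (cases "y \<le> k"; cases "in_mid y"; auto)
    thus False using p_A[of x] p_A[of y] xyz v by auto
  next
    case 2
    thus False using mid_start_avoids_231 xyz v by blast
  next
    case 3
    have "p z \<le> k" using p_B_range[of x] 3 v by auto
    hence z: "k + g1 < z \<and> z \<le> 2*k + g1"
      using p_A_range[of z] p_C_range[of z] p_mid_in_mid[of z] xyz 3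
      by (cases "z \<le> 2*k + g1"; cases "in_mid z"; auto)
    hence y: "k + g1 < y \<and> y \<le> 2*k + g1" using 3 xyz by auto
    have "\<beta> (x - k - g1) < \<beta> (y - k - g1)" "\<beta> (z - k - g1) < \<beta> (y - k - g1)"
      using v p_B[of x] p_B[of y] p_B[of z] 3 y z by auto
    moreover have "1 \<le> x - k - g1" "x - k - g1 < y - k - g1" "y - k - g1 < z - k - g1" "z - k - g1 \<le> k"
      using 3 y z xyz by auto
    ultimately show False using valley_perms_no_peak[OF valley] by blast
  next
    case 4
    define a1 a2 a3 where "a1 = n + 1 - x" and "a2 = n + 1 - y" and "a3 = n + 1 - z"
    have a: "a1 \<in> {1..k}" "a2 \<in> {1..k}" "a3 \<in> {1..k}"
      using 4 xyz unfolding a1_def a2_def a3_def by auto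
    have "inv \<beta> a3 < inv \<beta> a1" "inv \<beta> a1 < inv \<beta> a2" "a3 < a2" "a2 < a1"
      using v p_C[of x] p_C[of y] p_C[of z] 4 xyz unfolding a1_def a2_def a3_def by auto
    moreover have "1 \<le> inv \<beta> a3" "inv \<beta> a2 \<le> k" using inv_\<beta>_range a by auto
    ultimately show False
      using valley_perms_no_peak[OF valley, of "inv \<beta> a3" "inv \<beta> a1" "inv \<beta> a2"] by auto
  qed
qed

lemma not_mid_not_involution:
  assumes "i \<in> {1..n}" and "\<not> in_mid i"
  shows "p (p i) \<noteq> i" and "p i \<noteq> i"
proof -
  obtain a where a: "a \<in> {1..k}" "i = a \<or> i = k + g1 + inv \<beta> a \<or> i = n + 1 - a"
    using not_mid_in_three_cycle[OF assms] by blast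
  show "p (p i) \<noteq> i" "p i \<noteq> i" using a(2) p_three_cycle[OF a(1)] three_cycle_bounds[OF a(1)] by auto
qed

lemma fixpoints_eq: "{i\<in>{1..n}. p i = i} = mid_pos k g1 ` {u\<in>{1..g1+g2}. mid_inv g1 g2 b u = u}"
proof (intro equalityI subsetI)
  fix i assume "i \<in> {i\<in>{1..n}. p i = i}"
  hence i: "i \<in> {1..n}" "p i = i" by auto
  hence mid: "in_mid i" using not_mid_not_involution(2) by blast
  have "mid_pos k g1 (mid_inv g1 g2 b (mid_index k g1 i)) = mid_pos k g1 (mid_index k g1 i)"
    using p_mid[OF mid] i(2) mid_pos_mid_index[OF mid] by simp
  hence "mid_inv g1 g2 b (mid_index k g1 i) = mid_index k g1 i" by simp
  thus "i \<in> mid_pos k g1 ` {u\<in>{1..g1+g2}. mid_inv g1 g2 b u = u}"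
    using mid_pos_mid_index[OF mid] mid_index_range[OF mid] by (intro rev_image_eqI) auto
next
  fix i assume "i \<in> mid_pos k g1 ` {u\<in>{1..g1+g2}. mid_inv g1 g2 b u = u}"
  then obtain u where u: "u \<in> {1..g1+g2}" "mid_inv g1 g2 b u = u" "i = mid_pos k g1 u" by auto
  have mid: "in_mid i" using in_mid_mid_pos u by auto
  thus "i \<in> {i\<in>{1..n}. p i = i}" using p_mid[OF mid] u by auto
qed

lemma swaps_eq: "{i\<in>{1..n}. i < p i \<and> p (p i) = i} = mid_pos k g1 ` {u\<in>{1..g1+g2}. u < mid_inv g1 g2 b u}"
proof (intro equalityI subsetI)
  fix i assume "i \<in> {i\<in>{1..n}. i < p i \<and> p (p i) = i}"
  hence i: "i \<in> {1..n}" "i < p i" "p (p i) = i" by auto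
  hence mid: "in_mid i" using not_mid_not_involution(1) by blast
  have "mid_pos k g1 (mid_index k g1 i) < mid_pos k g1 (mid_inv g1 g2 b (mid_index k g1 i))"
    using p_mid[OF mid] i(2) mid_pos_mid_index[OF mid] by simp
  hence "mid_index k g1 i < mid_inv g1 g2 b (mid_index k g1 i)" by simp
  thus "i \<in> mid_pos k g1 ` {u\<in>{1..g1+g2}. u < mid_inv g1 g2 b u}"
    using mid_pos_mid_index[OF mid] mid_index_range[OF mid] by (intro rev_image_eqI) auto
next
  fix i assume "i \<in> mid_pos k g1 ` {u\<in>{1..g1+g2}. u < mid_inv g1 g2 b u}"
  then obtain u where u: "u \<in> {1..g1+g2}" "u < mid_inv g1 g2 b u" "i = mid_pos k g1 u" by auto
  have mid: "in_mid i" using in_mid_mid_pos u by auto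
  have "i < p i" using p_mid[OF mid] u by simp
  thus "i \<in> {i\<in>{1..n}. i < p i \<and> p (p i) = i}" using p_mid_involution[OF mid] mid by auto
qed

lemma ncyc_1: "ncyc 1 p n = mid_fixes g1 g2 b"
proof -
  have "inj_on (mid_pos k g1) {u\<in>{1..g1+g2}. mid_inv g1 g2 b u = u}" by (simp add: inj_on_def)
  thus ?thesis
    using ncyc_1_eq_card_fixpoints p_short_cycles fixpoints_eq card_mid_inv_fixed by (simp add: card_image)
qed

lemma ncyc_2: "ncyc 2 p n = mid_swaps g1 g2 b"
proof -
  have "inj_on (mid_pos k g1) {u\<in>{1..g1+g2}. u < mid_inv g1 g2 b u}" by (simp add: inj_on_def)
  thus ?thesis
    using ncyc_2_eq_card_swaps p_short_cycles p_maps swaps_eq card_mid_inv_raised by (simp add: card_image)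
qed

lemma three_cycles_cover:
  "\<forall>i\<in>{1..n}. card (orb p i) = 3 \<longrightarrow> (\<exists>(a, b, c)\<in>three_cycles p. i \<in> {a, b, c})"
proof (intro ballI impI)
  fix i assume i: "i \<in> {1..n}" "card (orb p i) = 3"
  hence "p (p i) \<noteq> i" using card_orb_short(3) p_short_cycles by blast
  hence "\<not> in_mid i" using p_mid_involution by auto
  then obtain a where a: "a \<in> {1..k}" "i = a \<or> i = k + g1 + inv \<beta> a \<or> i = n + 1 - a"
    using not_mid_in_three_cycle i by blast
  hence "(a, k + g1 + inv \<beta> a, n + 1 - a) \<in> three_cycles p" using three_cycles_eq by auto
  thus "\<exists>(a, b, c)\<in>three_cycles p. i \<in> {a, b, c}" using a(2) by auto
qed

lemma ncyc_3: "ncyc 3 p n = k"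
proof -
  have "\<forall>(a, b, c)\<in>three_cycles p. a \<in> {1..n}" using three_cycles_eq by auto
  thus ?thesis using ncyc_3_eq_card_three_cycles[OF three_cycles_cover] card_three_cycles by simp
qed

lemma crossing_perm_in_Rset:
  assumes "1 \<le> mid_fixes g1 g2 b" and "1 \<le> mid_swaps g1 g2 b"
  shows "p \<in> Rset n"
proof -
  have orbits: "\<forall>i\<in>{1..n}. card (orb p i) \<in> {1, 2, 3}"
    using card_orb_short[of p, OF p_short_cycles] by auto
  have first: "(1, k + g1 + inv \<beta> 1, n) \<in> three_cycles p"
    unfolding three_cycles_eq using k_pos by (intro image_eqI[of _ _ 1]) auto
  have "crossing_3cycles p (three_cycles p)"
    unfolding crossing_3cycles_def
  proof (intro conjI)
    show "three_cycles p \<noteq> {}" using first by auto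
    show "\<forall>(a, b, c)\<in>three_cycles p. \<forall>(a', b', c')\<in>three_cycles p. \<forall>(a'', b'', c'')\<in>three_cycles p.
        a < b' \<and> b' < c''"
    proof -
      have bounds: "a \<le> k \<and> k + g1 < b' \<and> b' \<le> 2*k + g1 \<and> 2*k + g1 + g2 < c"
        if "(a, b', c) \<in> three_cycles p" for a b' c
        using that three_cycle_bounds inv_\<beta>_range unfolding three_cycles_eq by fastforce
      show ?thesis by (auto dest!: bounds)
    qed
  qed simp
  moreover have "1 \<in> blockA (three_cycles p)" and "n \<in> blockC (three_cycles p)"
    using first unfolding blockA_def blockC_def by force+
  ultimately show ?thesis
    unfolding Rset_def using p_permutes p_avoids_231 orbits ncyc_1 ncyc_2 assms three_cycles_cover by auto
qed

end

section \<open>Every permutation of \<open>R\<close> is assembled\<close>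

lemma in_blockA_iff: "a \<in> blockA S \<longleftrightarrow> (\<exists>b c. (a, b, c) \<in> S)"
  by (force simp: blockA_def)

lemma in_blockB_iff: "b \<in> blockB S \<longleftrightarrow> (\<exists>a c. (a, b, c) \<in> S)"
  by (force simp: blockB_def)

lemma in_blockC_iff: "c \<in> blockC S \<longleftrightarrow> (\<exists>a b. (a, b, c) \<in> S)"
  by (force simp: blockC_def)

locale Rset_member =
  fixes n :: nat and p :: "nat \<Rightarrow> nat"
  assumes n_pos: "1 \<le> n" and member: "p \<in> Rset n"
begin

abbreviation "T \<equiv> three_cycles p"
abbreviation "A \<equiv> blockA T"
abbreviation "B \<equiv> blockB T"
abbreviation "C \<equiv> blockC T"

definition M :: "nat set" where
  "M = {1..n} - (A \<union> B \<union> C)"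

lemma p_permutes: "p permutes {1..n}"
  using member by (simp add: Rset_def)

lemma no_231: "1 \<le> x \<Longrightarrow> x < y \<Longrightarrow> y < z \<Longrightarrow> z \<le> n \<Longrightarrow> p z < p x \<Longrightarrow> p x < p y \<Longrightarrow> False"
  using member unfolding Rset_def avoids231_def by blast

lemma card_orb: "i \<in> {1..n} \<Longrightarrow> card (orb p i) \<in> {1, 2, 3}"
  using member by (simp add: Rset_def)

lemma in_three_cycle: "i \<in> {1..n} \<Longrightarrow> card (orb p i) = 3 \<Longrightarrow> \<exists>(a, b, c)\<in>T. i \<in> {a, b, c}"
  using member by (simp add: Rset_def)

lemma crossing:
  assumes "a \<in> A" "b \<in> B" "c \<in> C"
  shows "a < b \<and> b < c"
proof -
  have "\<forall>(a, b, c)\<in>T. \<forall>(a', b', c')\<in>T. \<forall>(a'', b'', c'')\<in>T. a < b' \<and> b' < c''"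
    using member by (simp add: Rset_def crossing_3cycles_def)
  moreover obtain b1 c1 a2 c2 a3 b3 where "(a, b1, c1) \<in> T" "(a2, b, c2) \<in> T" "(a3, b3, c) \<in> T"
    using assms in_blockA_iff in_blockB_iff in_blockC_iff by metis
  ultimately show ?thesis by fastforce
qed

lemma one_in_A: "1 \<in> A" and n_in_C: "n \<in> C"
  using member by (simp_all add: Rset_def)

lemma p_in: "i \<in> {1..n} \<Longrightarrow> p i \<in> {1..n}"
  by (metis p_permutes permutes_in_image)

lemma p_out: "i \<notin> {1..n} \<Longrightarrow> p i = i"
  by (metis p_permutes permutes_not_in)

lemma p_eq_iff: "p x = p y \<longleftrightarrow> x = y"
  by (metis p_permutes permutes_inj injD)

lemma T_D: "(a, b, c) \<in> T \<Longrightarrow> a < b \<and> b < c \<and> p a = c \<and> p c = b \<and> p b = a"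
  by (simp add: three_cycles_def)

lemma T_in: assumes "(a, b, c) \<in> T" shows "a \<in> {1..n}" and "b \<in> {1..n}" and "c \<in> {1..n}"
proof -
  have t: "a < b" "p a = c" "p c = b" using T_D[OF assms] by auto
  show a: "a \<in> {1..n}" using p_out[of a] t by force
  show "c \<in> {1..n}" using p_in[OF a] t by simp
  thus "b \<in> {1..n}" using p_in t by metis
qed

lemma A_less_B: "a \<in> A \<Longrightarrow> b \<in> B \<Longrightarrow> a < b"
  using crossing n_in_C by blast

lemma B_less_C: "b \<in> B \<Longrightarrow> c \<in> C \<Longrightarrow> b < c"
  using crossing one_in_A by blast

lemma A_less_C: "a \<in> A \<Longrightarrow> c \<in> C \<Longrightarrow> a < c"
  using A_less_B B_less_C in_blockA_iff in_blockB_iff by (meson order.strict_trans)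

lemma finite_T: "finite T"
  by (rule finite_subset[of _ "{1..n} \<times> {1..n} \<times> {1..n}"]) (use T_in in auto)

lemma A_sub: "A \<subseteq> {1..n}" and B_sub: "B \<subseteq> {1..n}" and C_sub: "C \<subseteq> {1..n}"
  using T_in by (auto simp: blockA_def blockB_def blockC_def)

lemma triple_of_A: "a \<in> A \<Longrightarrow> (a, p (p a), p a) \<in> T"
  using T_D in_blockA_iff by fastforce

lemma triple_of_B: "b \<in> B \<Longrightarrow> (p b, b, p (p b)) \<in> T"
  using T_D in_blockB_iff by fastforce

lemma triple_of_C: "c \<in> C \<Longrightarrow> (p (p c), p c, c) \<in> T"
  using T_D in_blockC_iff by fastforce

lemma p_A_in_C: "a \<in> A \<Longrightarrow> p a \<in> C"
  using triple_of_A in_blockC_iff by blast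

lemma p_B_in_A: "b \<in> B \<Longrightarrow> p b \<in> A"
  using triple_of_B in_blockA_iff by blast

lemma p_C_in_B: "c \<in> C \<Longrightarrow> p c \<in> B"
  using triple_of_C in_blockB_iff by blast

lemma card_orb_ge_3:
  assumes i: "i \<in> {1..n}" and "p (p i) \<noteq> i"
  shows "3 \<le> card (orb p i)"
proof -
  have "(p ^^ m) i \<in> {1..n}" for m by (induction m) (use i p_in in auto)
  hence sub: "orb p i \<subseteq> {1..n}" by (auto simp: orb_def)
  have "(p ^^ 0) i \<in> orb p i" "(p ^^ 1) i \<in> orb p i" "(p ^^ 2) i \<in> orb p i" unfolding orb_def by blast+
  hence "{i, p i, p (p i)} \<subseteq> orb p i" by (simp add: numeral_2_eq_2)
  moreover have "card {i, p i, p (p i)} = 3" using assms(2) p_eq_iff by (metis card_3_iff)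
  ultimately show ?thesis using sub by (metis card_mono finite_atLeastAtMost finite_subset)
qed

lemma M_involution: "i \<in> M \<Longrightarrow> p (p i) = i"
proof (rule ccontr)
  assume i: "i \<in> M" "p (p i) \<noteq> i"
  hence i1: "i \<in> {1..n}" by (simp add: M_def)
  have "card (orb p i) = 3" using card_orb_ge_3[OF i1 i(2)] card_orb[OF i1] by auto
  then obtain a b c where "(a, b, c) \<in> T" "i \<in> {a, b, c}" using in_three_cycle[OF i1] by blast
  hence "i \<in> A \<union> B \<union> C" unfolding in_blockA_iff in_blockB_iff in_blockC_iff Un_iff by blast
  thus False using i by (simp add: M_def)
qed

lemma p_M_in_M: "i \<in> M \<Longrightarrow> p i \<in> M"
proof -
  assume i: "i \<in> M"
  have "p i \<notin> A \<union> B \<union> C"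
  proof
    assume "p i \<in> A \<union> B \<union> C"
    hence "p (p i) \<in> A \<union> B \<union> C" using p_A_in_C p_B_in_A p_C_in_B by blast
    thus False using M_involution[OF i] i by (simp add: M_def)
  qed
  thus ?thesis using p_in i by (simp add: M_def)
qed

lemma position_cases: "i \<in> {1..n} \<Longrightarrow> i \<in> A \<or> i \<in> B \<or> i \<in> C \<or> i \<in> M"
  by (auto simp: M_def)

lemma M_in: "i \<in> M \<Longrightarrow> i \<in> {1..n}"
  and M_not_A: "i \<in> M \<Longrightarrow> i \<notin> A" and M_not_B: "i \<in> M \<Longrightarrow> i \<notin> B" and M_not_C: "i \<in> M \<Longrightarrow> i \<notin> C"
  by (auto simp: M_def)

lemma finite_A: "finite A" and finite_B: "finite B" and finite_C: "finite C"
  using finite_T by (simp_all add: blockA_def blockB_def blockC_def)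

lemma B_nonempty: "B \<noteq> {}"
  using one_in_A in_blockA_iff in_blockB_iff by blast

lemma A_decreasing:
  assumes a: "a \<in> A" "a' \<in> A" "a < a'"
  shows "p a' < p a"
proof (rule ccontr)
  assume "\<not> p a' < p a"
  moreover have "p a' \<noteq> p a" using a p_eq_iff by auto
  ultimately have lt: "p a < p a'" by auto
  obtain b where b: "b \<in> B" using B_nonempty by auto
  have "p b < p a" using A_less_C p_A_in_C p_B_in_A a(1) b by blast
  moreover have "a' < b" using A_less_B a(2) b by auto
  moreover have "1 \<le> a" "b \<le> n" using A_sub B_sub a b by auto
  ultimately show False using no_231[of a a' b] lt a by auto
qed

lemma M_greater_A:
  assumes i: "i \<in> M" and a: "a \<in> A"
  shows "a < i"
proof (rule ccontr)
  assume "\<not> a < i"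
  moreover have "a \<noteq> i" using i a M_not_A by auto
  ultimately have ia: "i < a" by auto
  have pi: "p i \<in> M" using p_M_in_M i by auto
  have pa: "p a \<in> C" using p_A_in_C a by auto
  have "p i \<noteq> p a" using pi pa M_not_C by auto
  hence "p i < p a \<or> p a < p i" by auto
  thus False
  proof
    assume lt: "p i < p a"
    define b1 where "b1 = p (p 1)"
    have t1: "(1, b1, p 1) \<in> T" using triple_of_A[OF one_in_A] by (simp add: b1_def)
    hence b1: "b1 \<in> B" "p b1 = 1" using T_D[OF t1] in_blockB_iff by blast+
    have "p i \<noteq> 1" using M_not_A[OF pi] one_in_A by auto
    hence "p b1 < p i" using b1(2) M_in[OF pi] by auto
    moreover have "1 \<le> i" "a < b1" "b1 \<le> n" using M_in[OF i] A_less_B[OF a b1(1)] B_sub b1(1) by auto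
    ultimately show False using no_231[of i a b1] ia lt by auto
  next
    assume lt: "p a < p i"
    have t: "(a, p (p a), p a) \<in> T" using triple_of_A[OF a] .
    hence b: "p (p a) \<in> B" "p (p (p a)) = a" using in_blockB_iff T_D by blast+
    have "p (p a) < p a" using B_less_C b(1) pa by auto
    moreover have "1 \<le> p (p a)" "p i \<le> n" using B_sub b(1) M_in[OF pi] by auto
    moreover have "p (p i) < p (p (p a))" using M_involution[OF i] b(2) ia by simp
    moreover have "p (p (p a)) < p (p a)" using b A_less_B a by auto
    ultimately show False using no_231[of "p (p a)" "p a" "p i"] lt by auto
  qed
qed

lemma M_less_C:
  assumes i: "i \<in> M" and c: "c \<in> C"
  shows "i < c"
proof (rule ccontr)
  assume "\<not> i < c"
  moreover have "c \<noteq> i" using i c M_not_C by auto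
  ultimately have ci: "c < i" by auto
  have pi: "p i \<in> M" using p_M_in_M i by auto
  have t: "(p (p c), p c, c) \<in> T" using triple_of_C[OF c] .
  hence a: "p (p c) \<in> A" "p (p (p c)) = c" using in_blockA_iff T_D by blast+
  have pc: "p c \<in> B" using p_C_in_B c by auto
  have "p i \<noteq> c" using pi c M_not_C by auto
  hence "c < p i \<or> p i < c" by auto
  thus False
  proof
    assume lt: "c < p i"
    have "i \<noteq> n" using i n_in_C M_not_C by auto
    hence "i < n" using M_in[OF i] by auto
    moreover have "p (p c) < i" "1 \<le> p (p c)" using M_greater_A i a A_sub by auto
    moreover have "p n < c" using B_less_C p_C_in_B[OF n_in_C] c by blast
    ultimately show False using no_231[of "p (p c)" i n] lt a by auto
  next
    assume lt: "p i < c"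
    have "p (p c) < p i" "1 \<le> p (p c)" "c \<le> n" using M_greater_A pi a A_sub C_sub c by auto
    moreover have "p c < c" using B_less_C pc c by auto
    moreover have "c < p (p i)" using M_involution[OF i] ci by simp
    ultimately show False using no_231[of "p (p c)" "p i" c] lt a by auto
  qed
qed

lemma M_not_inside_B:
  assumes i: "i \<in> M" and b: "b \<in> B" "b' \<in> B" and lt: "b < i" "i < b'"
  shows False
proof -
  have a: "p b \<in> A" "p b' \<in> A" using p_B_in_A b by auto
  have "p b \<noteq> p b'" using p_eq_iff lt by auto
  hence "p b' < p b \<or> p b < p b'" by auto
  thus False
  proof
    assume "p b' < p b"
    moreover have "p b < p i" using M_greater_A[OF p_M_in_M[OF i] a(1)] .
    moreover have "1 \<le> b" "b' \<le> n" using B_sub b by auto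
    ultimately show False using no_231[of b i b'] lt by auto
  next
    assume ab: "p b < p b'"
    have t: "(p b, b, p (p b)) \<in> T" "(p b', b', p (p b')) \<in> T" using triple_of_B b by auto
    have returns: "p (p (p b)) = b" "p (p (p b')) = b'" using T_D t by blast+
    have c: "p (p b) \<in> C" "p (p b') \<in> C" using in_blockC_iff t by blast+
    have "p (p b') < p (p b)" using A_decreasing[OF a ab] .
    moreover have "p i < p (p b')" using M_less_C[OF p_M_in_M[OF i] c(2)] .
    moreover have "1 \<le> p i" "p (p b) \<le> n" using M_in[OF p_M_in_M[OF i]] C_sub c by auto
    moreover have "p (p (p b)) < p (p i)" "p (p i) < p (p (p b'))" using returns M_involution[OF i] lt by simp_all
    ultimately show False using no_231[of "p i" "p (p b')" "p (p b)"] by auto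
  qed
qed

definition k :: nat where
  "k = card T"

lemma card_blocks: "card A = k" "card B = k" "card C = k"
proof -
  have "inj_on (\<lambda>(a, b, c). a) T" "inj_on (\<lambda>(a, b, c). b) T" "inj_on (\<lambda>(a, b, c). c) T"
    by (intro inj_onI; clarify; metis T_D)+
  thus "card A = k" "card B = k" "card C = k"
    by (simp_all add: k_def blockA_def blockB_def blockC_def card_image)
qed

lemma k_pos: "1 \<le> k"
  using card_blocks(1) finite_A one_in_A by (metis Suc_leI card_gt_0_iff empty_iff One_nat_def)

lemma A_eq: "A = {1..k}"
proof -
  define h where "h = Max A"
  have h: "h \<in> A" using h_def finite_A one_in_A by (metis Max_in empty_iff)
  have "A \<subseteq> {1..h}" using A_sub h_def finite_A by auto
  moreover have "{1..h} \<subseteq> A"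
  proof
    fix i assume i: "i \<in> {1..h}"
    hence "i \<in> {1..n}" using h A_sub by auto
    moreover have "i \<notin> B" "i \<notin> C" "i \<notin> M"
      using A_less_B[OF h] A_less_C[OF h] M_greater_A[OF _ h] i by fastforce+
    ultimately show "i \<in> A" using position_cases by blast
  qed
  ultimately have "A = {1..h}" by auto
  thus ?thesis using card_blocks(1) by simp
qed

lemma C_eq: "C = {n + 1 - k..n}"
proof -
  define l where "l = Min C"
  have l: "l \<in> C" using l_def finite_C n_in_C by (metis Min_in empty_iff)
  have "C \<subseteq> {l..n}" using C_sub l_def finite_C by auto
  moreover have "{l..n} \<subseteq> C"
  proof
    fix i assume i: "i \<in> {l..n}"
    hence "i \<in> {1..n}" using l C_sub by auto
    moreover have "i \<notin> A" "i \<notin> B" "i \<notin> M"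
      using A_less_C[OF _ l] B_less_C[OF _ l] M_less_C[OF _ l] i by fastforce+
    ultimately show "i \<in> C" using position_cases by blast
  qed
  ultimately have "C = {l..n}" by auto
  moreover from this have "n + 1 - l = k" using card_blocks(3) by simp
  moreover have "l \<le> n" using l C_sub by auto
  ultimately show ?thesis by auto
qed

lemma B_interval: "B = {Min B..Min B + k - 1}"
proof -
  define l h where "l = Min B" and "h = Max B"
  have lh: "l \<in> B" "h \<in> B" unfolding l_def h_def using finite_B B_nonempty by simp_all
  have "B \<subseteq> {l..h}" unfolding l_def h_def using finite_B by auto
  moreover have "{l..h} \<subseteq> B"
  proof
    fix i assume i: "i \<in> {l..h}"
    hence "i \<in> {1..n}" using lh B_sub by auto
    moreover have "i \<notin> A" using A_less_B[of i l] lh(1) i by auto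
    moreover have "i \<notin> C" using B_less_C[of h i] lh(2) i by auto
    moreover have "i \<notin> M"
    proof
      assume iM: "i \<in> M"
      hence "i \<noteq> l" "i \<noteq> h" using lh M_not_B by auto
      thus False using M_not_inside_B[OF iM lh] i by auto
    qed
    ultimately show "i \<in> B" using position_cases by blast
  qed
  ultimately have B: "B = {l..h}" by (rule antisym)
  hence "h + 1 - l = k" using card_blocks(2) by simp
  moreover have "l \<le> h" using lh B by auto
  ultimately have "{l..h} = {l..l + k - 1}" by auto
  thus ?thesis using B unfolding l_def by simp
qed

definition g1 :: nat where
  "g1 = Min B - k - 1"

definition g2 :: nat where
  "g2 = n + 1 - 2*k - Min B"

lemma n_eq: "n = 3*k + g1 + g2"
  and B_eq: "B = {k + g1 + 1..2*k + g1}"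
  and C_eq': "C = {2*k + g1 + g2 + 1..n}"
proof -
  have "Min B \<in> B" "Min B + k - 1 \<in> B" "n + 1 - k \<in> C"
    using B_interval C_eq k_pos n_pos card_blocks(3) finite_B B_nonempty by auto
  hence "k < Min B" "Min B + k - 1 < n + 1 - k"
    using A_less_B[of k] A_eq k_pos B_less_C by auto
  hence m: "Min B = k + g1 + 1" and "n = 3*k + g1 + g2" unfolding g1_def g2_def by auto
  thus "n = 3*k + g1 + g2" "B = {k + g1 + 1..2*k + g1}" "C = {2*k + g1 + g2 + 1..n}"
    using B_interval[unfolded m] C_eq by auto
qed

lemma M_eq: "i \<in> M \<longleftrightarrow> (k < i \<and> i \<le> k + g1) \<or> (2*k + g1 < i \<and> i \<le> 2*k + g1 + g2)"
  unfolding M_def using A_eq B_eq C_eq' n_eq by auto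

lemma p_on_A:
  assumes "i \<in> {1..k}"
  shows "p i = n + 1 - i"
proof -
  have maps: "n + 1 - k \<le> p x \<and> p x \<le> n + 1 - k + (k - 1)" if "1 \<le> x" "x \<le> 1 + (k - 1)" for x
  proof -
    have "p x \<in> C" using p_A_in_C that A_eq k_pos by auto
    thus ?thesis using C_eq k_pos by auto
  qed
  have "p y < p x" if "1 \<le> x" "x < y" "y \<le> 1 + (k - 1)" for x y
    using A_decreasing[of x y] that A_eq k_pos by auto
  hence "p i = n + 1 - k + (k - 1) - (i - 1)"
    by (intro antimono_interval_map_eq[OF maps]) (use assms k_pos in auto)
  thus ?thesis using assms k_pos n_eq by auto
qed

definition \<beta> :: "nat \<Rightarrow> nat" where
  "\<beta> i = (if i \<in> {1..k} then p (k + g1 + i) else i)"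

lemma p_on_B: "i \<in> B \<Longrightarrow> p i = \<beta> (i - k - g1)"
  using B_eq by (auto simp: \<beta>_def)

lemma \<beta>_valley: "\<beta> \<in> valley_perms k"
proof -
  have "\<beta> permutes {1..k}"
  proof (rule inj_imp_permutes)
    show "inj_on \<beta> {1..k}" by (rule inj_onI) (auto simp: \<beta>_def p_eq_iff)
    show "\<beta> i \<in> {1..k}" if "i \<in> {1..k}" for i
      using p_B_in_A[of "k + g1 + i"] that B_eq A_eq by (auto simp: \<beta>_def)
  qed (auto simp: \<beta>_def)
  moreover have "no_peak \<beta> k"
    unfolding no_peak_def
  proof (intro allI impI notI, elim conjE)
    fix x y z assume xyz: "1 \<le> x" "x < y" "y < z" "z \<le> k" and peak: "\<beta> x < \<beta> y" "\<beta> z < \<beta> y"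
    define b1 b2 b3 where "b1 = k + g1 + x" and "b2 = k + g1 + y" and "b3 = k + g1 + z"
    have b: "b1 \<in> B" "b2 \<in> B" "b3 \<in> B" using B_eq xyz by (auto simp: b1_def b2_def b3_def)
    have pb: "p b1 < p b2" "p b3 < p b2" using peak xyz by (auto simp: \<beta>_def b1_def b2_def b3_def)
    have "p b1 \<noteq> p b3" using p_eq_iff xyz by (auto simp: b1_def b3_def)
    hence "p b3 < p b1 \<or> p b1 < p b3" by auto
    thus False
    proof
      assume "p b3 < p b1"
      moreover have "1 \<le> b1" "b1 < b2" "b2 < b3" "b3 \<le> n" using b B_sub xyz by (auto simp: b1_def b2_def b3_def)
      ultimately show False using no_231[of b1 b2 b3] pb by auto
    next
      \<comment> \<open>then the 3-cycles through \<open>b1, b2, b3\<close> put a 231 pattern into C\<close>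
      assume up: "p b1 < p b3"
      have a: "p b1 \<in> A" "p b2 \<in> A" "p b3 \<in> A" using p_B_in_A b by auto
      have t: "(p b1, b1, p (p b1)) \<in> T" "(p b2, b2, p (p b2)) \<in> T" "(p b3, b3, p (p b3)) \<in> T"
        using triple_of_B b by auto
      have "p (p (p b1)) = b1" "p (p (p b2)) = b2" "p (p (p b3)) = b3" using T_D t by blast+
      moreover have "p (p b1) \<le> n" "1 \<le> p (p b2)" using T_in(3)[OF t(1)] T_in(3)[OF t(2)] by auto
      moreover have "p (p b2) < p (p b3)" "p (p b3) < p (p b1)" using A_decreasing a pb(2) up by auto
      ultimately show False
        using no_231[of "p (p b2)" "p (p b3)" "p (p b1)"] xyz by (auto simp: b1_def b2_def b3_def)
    qed
  qed
  ultimately show ?thesis by (simp add: valley_perms_def)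
qed

lemma p_on_C:
  assumes i: "i \<in> C"
  shows "p i = k + g1 + inv \<beta> (n + 1 - i)"
proof -
  have t: "(p (p i), p i, i) \<in> T" by (rule triple_of_C[OF i])
  have a: "p (p i) \<in> A" and b: "p i \<in> B" using t in_blockA_iff in_blockB_iff by blast+
  have "p (p (p i)) = i" using T_D[OF t] by simp
  moreover have "p (p (p i)) = n + 1 - p (p i)" using p_on_A a A_eq by auto
  ultimately have "n + 1 - i = p (p i)" using a A_eq n_eq by auto
  also have "\<dots> = \<beta> (p i - k - g1)" using p_on_B[OF b] by simp
  finally have "inv \<beta> (n + 1 - i) = p i - k - g1"
    using permutes_inverses(2)[OF valley_perms_permutes[OF \<beta>_valley]] by simp
  thus ?thesis using b B_eq by auto
qed

definition \<nu> :: "nat \<Rightarrow> nat" where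
  "\<nu> u = mid_index k g1 (p (mid_pos k g1 u))"

lemma mid_pos_in_M: "u \<in> {1..g1+g2} \<Longrightarrow> mid_pos k g1 u \<in> M"
  using M_eq by (auto simp: mid_pos_def)

lemma mid_index_in_range: "i \<in> M \<Longrightarrow> mid_index k g1 i \<in> {1..g1+g2}"
  unfolding M_eq by (auto simp: mid_index_def)

lemma mid_pos_mid_index_M: "i \<in> M \<Longrightarrow> mid_pos k g1 (mid_index k g1 i) = i"
  unfolding M_eq by (auto simp: mid_index_def mid_pos_def)

lemma p_mid_pos: "u \<in> {1..g1+g2} \<Longrightarrow> p (mid_pos k g1 u) = mid_pos k g1 (\<nu> u)"
  using mid_pos_mid_index_M p_M_in_M mid_pos_in_M by (simp add: \<nu>_def)

lemma \<nu>_less_iff: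
  "u \<in> {1..g1+g2} \<Longrightarrow> v \<in> {1..g1+g2} \<Longrightarrow> \<nu> u < \<nu> v \<longleftrightarrow> p (mid_pos k g1 u) < p (mid_pos k g1 v)"
  using p_mid_pos by simp

lemma \<nu>_range: "u \<in> {1..g1+g2} \<Longrightarrow> \<nu> u \<in> {1..g1+g2}"
  using mid_index_in_range p_M_in_M mid_pos_in_M by (simp add: \<nu>_def)

lemma \<nu>_involution:
  assumes u: "u \<in> {1..g1+g2}"
  shows "\<nu> (\<nu> u) = u"
proof -
  have "p (mid_pos k g1 (\<nu> u)) = mid_pos k g1 u"
    using p_mid_pos[OF u] M_involution[OF mid_pos_in_M[OF u]] by simp
  thus ?thesis by (simp add: \<nu>_def)
qed

lemma \<nu>_decreasing_lower:
  assumes xy: "1 \<le> x" "x < y" "y \<le> g1"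
  shows "\<nu> y < \<nu> x"
proof (rule ccontr)
  assume "\<not> \<nu> y < \<nu> x"
  moreover have "\<nu> y \<noteq> \<nu> x" using \<nu>_involution[of x] \<nu>_involution[of y] xy by force
  ultimately have "\<nu> x < \<nu> y" by auto
  hence up: "p (mid_pos k g1 x) < p (mid_pos k g1 y)" using \<nu>_less_iff[of x y] xy by simp
  have B: "k + g1 + 1 \<in> B" using B_eq k_pos by auto
  have "p (k + g1 + 1) < p (mid_pos k g1 x)"
    using M_greater_A[OF p_M_in_M[OF mid_pos_in_M] p_B_in_A[OF B]] xy by auto
  moreover have "1 \<le> mid_pos k g1 x" "mid_pos k g1 x < mid_pos k g1 y" "mid_pos k g1 y < k + g1 + 1"
    "k + g1 + 1 \<le> n" using xy B B_sub by (auto simp: mid_pos_def)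
  ultimately show False using no_231 up by blast
qed

lemma \<nu>_ascent_lower:
  assumes xy: "1 \<le> x" "x < y" "y \<le> g1 + g2" and up: "\<nu> x < \<nu> y"
  shows "\<nu> x \<le> g1"
proof (rule ccontr)
  assume "\<not> \<nu> x \<le> g1"
  hence big: "2*k + g1 < p (mid_pos k g1 x)" using p_mid_pos xy by (auto simp: mid_pos_def)
  have B: "k + g1 + 1 \<in> B" using B_eq k_pos by auto
  define c where "c = p (p (k + g1 + 1))"
  have t: "(p (k + g1 + 1), k + g1 + 1, c) \<in> T" using triple_of_B[OF B] by (simp add: c_def)
  have c: "c \<in> C" "p c = k + g1 + 1" using T_D[OF t] t in_blockC_iff by blast+
  have "p c < p (mid_pos k g1 x)" using c(2) big k_pos by auto
  moreover have "p (mid_pos k g1 x) < p (mid_pos k g1 y)" using \<nu>_less_iff xy up by auto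
  moreover have "mid_pos k g1 y < c" using M_less_C mid_pos_in_M xy c(1) by auto
  moreover have "1 \<le> mid_pos k g1 x" "mid_pos k g1 x < mid_pos k g1 y" "c \<le> n"
    using xy C_sub c(1) by (auto simp: mid_pos_def)
  ultimately show False using no_231 by blast
qed

lemma \<nu>_avoids_231:
  assumes xyz: "1 \<le> x" "x < y" "y < z" "z \<le> g1 + g2" and v: "\<nu> z < \<nu> x" "\<nu> x < \<nu> y"
  shows False
proof -
  have "p (mid_pos k g1 z) < p (mid_pos k g1 x)" "p (mid_pos k g1 x) < p (mid_pos k g1 y)"
    using \<nu>_less_iff xyz v by auto
  moreover have "1 \<le> mid_pos k g1 x" "mid_pos k g1 x < mid_pos k g1 y" "mid_pos k g1 y < mid_pos k g1 z"
    "mid_pos k g1 z \<le> n" using xyz M_in[OF mid_pos_in_M, of z] by (auto simp: mid_pos_def)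
  ultimately show False using no_231 by blast
qed

lemma mid_involution_\<nu>: "mid_involution g1 g2 \<nu>"
  by unfold_locales (use \<nu>_range \<nu>_involution \<nu>_decreasing_lower \<nu>_ascent_lower \<nu>_avoids_231 in auto)

theorem eq_crossing_perm:
  obtains b where "b \<longrightarrow> 1 \<le> g1 \<and> 1 \<le> g2" and "crossing_assembly k \<beta>"
    and "n = 3*k + g1 + g2" and "p = crossing_perm k \<beta> g1 g2 b"
proof -
  obtain b where b: "b \<longrightarrow> 1 \<le> g1 \<and> 1 \<le> g2" "\<forall>u\<in>{1..g1+g2}. \<nu> u = mid_inv g1 g2 b u"
    using mid_involution.eq_mid_inv[OF mid_involution_\<nu>] by blast
  have assembly: "crossing_assembly k \<beta>" by unfold_locales (use k_pos \<beta>_valley in auto)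
  note q = crossing_assembly.p_outside[OF assembly, of _ g1 g2 b] crossing_assembly.p_A[OF assembly, of _ g1 g2 b]
    crossing_assembly.p_B[OF assembly, of g1 _ g2 b] crossing_assembly.p_C[OF assembly, of g1 g2 _ b]
    crossing_assembly.p_mid[OF assembly, of _ g1 g2 b]
  have "p = crossing_perm k \<beta> g1 g2 b"
  proof
    fix i
    show "p i = crossing_perm k \<beta> g1 g2 b i"
    proof (cases "i \<in> {1..n}")
      case False
      thus ?thesis using p_out q(1) n_eq by auto
    next
      case True
      consider "i \<in> A" | "i \<in> B" | "i \<in> C" | "i \<in> M" using position_cases[OF True] by blast
      thus ?thesis
      proof cases
        case 1 thus ?thesis using p_on_A q(2) A_eq n_eq by auto
      next
        case 2 thus ?thesis using p_on_B q(3) B_eq by auto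
      next
        case 3 thus ?thesis using p_on_C q(4) C_eq' n_eq by auto
      next
        case 4
        have "p i = mid_pos k g1 (\<nu> (mid_index k g1 i))"
          using p_mid_pos[OF mid_index_in_range[OF 4]] mid_pos_mid_index_M[OF 4] by simp
        also have "\<dots> = mid_pos k g1 (mid_inv g1 g2 b (mid_index k g1 i))"
          using b(2) mid_index_in_range[OF 4] by simp
        also have "\<dots> = crossing_perm k \<beta> g1 g2 b i"
          using q(5) 4 unfolding M_eq by auto
        finally show ?thesis .
      qed
    qed
  qed
  thus ?thesis by (rule that[OF b(1) assembly n_eq])
qed

end

section \<open>The generating function\<close>

definition crossing_params :: "((nat \<times> (nat \<Rightarrow> nat)) \<times> (nat \<times> nat \<times> bool)) set" where
  "crossing_params = Sigma {1..} valley_perms \<times> mid_shapes"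

definition assemble :: "(nat \<times> (nat \<Rightarrow> nat)) \<times> (nat \<times> nat \<times> bool) \<Rightarrow> nat \<times> (nat \<Rightarrow> nat)" where
  "assemble = (\<lambda>((k, \<beta>), (g1, g2, b)). (3*k + g1 + g2, crossing_perm k \<beta> g1 g2 b))"

lemma crossing_params_D:
  assumes "((k, \<beta>), (g1, g2, b)) \<in> crossing_params"
  shows "crossing_assembly k \<beta>" and "(g1, g2, b) \<in> mid_shapes"
  using assms by (auto simp: crossing_params_def crossing_assembly_def)

lemma assemble_in_Rset:
  assumes "z \<in> crossing_params"
  shows "assemble z \<in> {(n, p). 1 \<le> n \<and> p \<in> Rset n}"
proof -
  obtain k \<beta> g1 g2 b where z: "z = ((k, \<beta>), (g1, g2, b))" by (metis prod.collapse)
  have a: "crossing_assembly k \<beta>" and shape: "(g1, g2, b) \<in> mid_shapes"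
    using crossing_params_D assms z by auto
  have "crossing_perm k \<beta> g1 g2 b \<in> Rset (3*k + g1 + g2)"
    using crossing_assembly.crossing_perm_in_Rset[OF a] shape by (simp add: mid_shapes_def)
  thus ?thesis using crossing_assembly.k_pos[OF a] z by (simp add: assemble_def)
qed

lemma Rset_in_image_assemble:
  assumes "1 \<le> n" and "p \<in> Rset n"
  shows "(n, p) \<in> assemble ` crossing_params"
proof -
  interpret R: Rset_member n p by unfold_locales (use assms in auto)
  obtain b where b: "b \<longrightarrow> 1 \<le> R.g1 \<and> 1 \<le> R.g2" and a: "crossing_assembly R.k R.\<beta>"
    and n: "n = 3*R.k + R.g1 + R.g2" and p: "p = crossing_perm R.k R.\<beta> R.g1 R.g2 b"
    by (rule R.eq_crossing_perm)
  have "ncyc 1 p n = mid_fixes R.g1 R.g2 b" "ncyc 2 p n = mid_swaps R.g1 R.g2 b"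
    using crossing_assembly.ncyc_1[OF a, of R.g1 R.g2 b] crossing_assembly.ncyc_2[OF a, of R.g1 R.g2 b]
    unfolding p[symmetric] n[symmetric] .
  moreover have "1 \<le> ncyc 1 p n" "1 \<le> ncyc 2 p n" using assms(2) by (simp_all add: Rset_def)
  ultimately have "1 \<le> mid_fixes R.g1 R.g2 b" "1 \<le> mid_swaps R.g1 R.g2 b" by simp_all
  hence "((R.k, R.\<beta>), (R.g1, R.g2, b)) \<in> crossing_params"
    using a b by (auto simp: crossing_params_def crossing_assembly_def mid_shapes_def)
  moreover have "assemble ((R.k, R.\<beta>), (R.g1, R.g2, b)) = (n, p)" using n p by (simp add: assemble_def)
  ultimately show ?thesis by (metis image_eqI)
qed

lemma image_assemble: "assemble ` crossing_params = {(n, p). 1 \<le> n \<and> p \<in> Rset n}"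
proof
  show "assemble ` crossing_params \<subseteq> {(n, p). 1 \<le> n \<and> p \<in> Rset n}"
    using assemble_in_Rset by (rule image_subsetI)
  show "{(n, p). 1 \<le> n \<and> p \<in> Rset n} \<subseteq> assemble ` crossing_params"
    using Rset_in_image_assemble by auto
qed

lemma crossing_perm_determines_blocks:
  assumes a: "crossing_assembly k \<beta>" "crossing_assembly k' \<beta>'"
    and n: "3*k + g1 + g2 = 3*k' + g1' + g2'"
    and p: "crossing_perm k \<beta> g1 g2 b = crossing_perm k' \<beta>' g1' g2' b'"
  shows "k = k'" and "g1 = g1'" and "g2 = g2'" and "\<beta> = \<beta>'"
proof -
  let ?p = "crossing_perm k \<beta> g1 g2 b"
  show k: "k = k'"
    using crossing_assembly.ncyc_3[OF a(1), of g1 g2 b] crossing_assembly.ncyc_3[OF a(2), of g1' g2' b'] n p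
    by simp
  have "blockB (three_cycles ?p) = {k + g1 + 1..2*k + g1}"
    by (rule crossing_assembly.blockB_three_cycles[OF a(1)])
  moreover have "blockB (three_cycles ?p) = {k + g1' + 1..2*k + g1'}"
    using crossing_assembly.blockB_three_cycles[OF a(2), of g1' g2' b'] p k by simp
  ultimately show g1: "g1 = g1'" using crossing_assembly.k_pos[OF a(1)] by auto
  show "g2 = g2'" using n k g1 by simp
  show "\<beta> = \<beta>'"
  proof
    fix i show "\<beta> i = \<beta>' i"
    proof (cases "i \<in> {1..k}")
      case True
      thus ?thesis using crossing_assembly.p_B[OF a(1), of g1 "k + g1 + i" g2 b]
        crossing_assembly.p_B[OF a(2), of g1' "k' + g1' + i" g2' b'] p k g1 by simp
    next
      case False
      thus ?thesis using valley_perms_fixes[of \<beta> k i] valley_perms_fixes[of \<beta>' k' i] a k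
        by (simp add: crossing_assembly_def)
    qed
  qed
qed

lemma inj_on_assemble: "inj_on assemble crossing_params"
proof (rule inj_onI)
  fix z z' assume zz: "z \<in> crossing_params" "z' \<in> crossing_params" and eq: "assemble z = assemble z'"
  obtain k \<beta> g1 g2 b where z: "z = ((k, \<beta>), (g1, g2, b))" by (metis prod.collapse)
  obtain k' \<beta>' g1' g2' b' where z': "z' = ((k', \<beta>'), (g1', g2', b'))" by (metis prod.collapse)
  have a: "crossing_assembly k \<beta>" "crossing_assembly k' \<beta>'"
    and shapes: "(g1, g2, b) \<in> mid_shapes" "(g1', g2', b') \<in> mid_shapes"
    using crossing_params_D zz z z' by auto
  let ?p = "crossing_perm k \<beta> g1 g2 b"
  have n: "3*k + g1 + g2 = 3*k' + g1' + g2'" and p: "?p = crossing_perm k' \<beta>' g1' g2' b'"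
    using eq z z' by (auto simp: assemble_def)
  note same = crossing_perm_determines_blocks[OF a n p]
  have "b = b'"
  proof (rule ccontr)
    assume ne: "b \<noteq> b'"
    hence g: "1 \<le> g1" "1 \<le> g2" using shapes same by (auto simp: mid_shapes_def)
    have "?p (k + 1) = mid_pos k g1 (mid_inv g1 g2 b 1)" "?p (k + 1) = mid_pos k g1 (mid_inv g1 g2 b' 1)"
      using crossing_assembly.p_mid[OF a(1), of "k + 1" g1 g2 b]
        crossing_assembly.p_mid[OF a(2), of "k + 1" g1' g2' b'] p same g
      by (simp_all add: mid_index_def)
    hence "mid_inv g1 g2 b 1 = mid_inv g1 g2 b' 1" by simp
    thus False using ne g by (cases b) (auto simp: mid_inv_def)
  qed
  thus "z = z'" using z z' same by simp
qed

lemma weight_assemble: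
  assumes "z \<in> crossing_params"
  shows "(\<lambda>(n, p). t ^ ncyc 1 p n * x ^ ncyc 2 p n * y ^ ncyc 3 p n) (assemble z)
    = (\<lambda>((k, \<beta>), q). y ^ k * mid_weight t x q) z"
proof -
  obtain k \<beta> g1 g2 b where z: "z = ((k, \<beta>), (g1, g2, b))" by (metis prod.collapse)
  have a: "crossing_assembly k \<beta>" using crossing_params_D assms z by auto
  show ?thesis
    using z crossing_assembly.ncyc_1[OF a] crossing_assembly.ncyc_2[OF a] crossing_assembly.ncyc_3[OF a]
    by (simp add: assemble_def mid_weight_def)
qed

theorem lemma3p9:
  fixes t x y :: real
  assumes "\<bar>x\<bar> < 1" and "\<bar>y\<bar> < 1/2"
  shows "((\<lambda>(n, p). t ^ ncyc 1 p n * x ^ ncyc 2 p n * y ^ ncyc 3 p n) has_sum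
           (y / (1 - 2*y) * ((6*x*t - 2*x^2*t + 2*x*t^2 - x^2*t^2) / (1 - x)^2)))
         {(n, p). n \<ge> 1 \<and> p \<in> Rset n}"
proof -
  let ?w = "\<lambda>(n, p). t ^ ncyc 1 p n * x ^ ncyc 2 p n * y ^ ncyc 3 p n"
  have "((\<lambda>((k, \<beta>), q). y ^ k * mid_weight t x q) has_sum (y / (1 - 2*y) * mid_gf t x)) crossing_params"
    unfolding crossing_params_def
    using has_sum_mult_Times_real[OF has_sum_valley_perms[OF assms(2)] has_sum_mid_weight[OF assms(1)]]
    by (simp add: case_prod_unfold)
  hence "((?w \<circ> assemble) has_sum (y / (1 - 2*y) * mid_gf t x)) crossing_params"
    by (rule has_sum_cong[THEN iffD2, rotated]) (use weight_assemble in auto)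
  hence "(?w has_sum (y / (1 - 2*y) * mid_gf t x)) (assemble ` crossing_params)"
    by (simp add: has_sum_reindex[OF inj_on_assemble])
  thus ?thesis by (simp add: image_assemble mid_gf_def)
qed

end
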